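(* Let $s,s'\in\mathbb C$, let $\phi,\phi'\colon\mathfrak X\to\mathbb C$ be $\Gamma$-invariant with $\Delta\phi=\chi(s)\phi$, $\Delta\phi'=\chi(s')\phi'$, with boundary values $\mu_{s,\phi},\mu_{s',\phi'}\in\mathcal D'(\Omega)$ ($\mathcal P_s\mu_{s,\phi}=\phi$, $\mathcal P_{s'}\mu_{s',\phi'}=\phi'$), and let $n\in\mathbb N$. For $a\in C^{\mathrm{lc}}(S\mathfrak X_\Gamma)$ define $a_n(x,\omega)=\sum a(y,\omega)$, the sum over all $y\in\mathfrak X$ with $d(y,x)=n$ and $x\in[y,\omega)$ (so $a_n\in C^{\mathrm{lc}}(S\mathfrak X_\Gamma)$). Then $$W^{\mathrm{near}}_n(a):=\int_{\Omega\times\Omega}\sum_{x\in\mathfrak X}\big(1-\mathbb 1_{S_n}(x,\omega,\omega')\big)\Xi(x,\omega)a(x,\omega)p_s(x,\omega)p_{-\overline{s'}}(x,\omega')\,d\mu_{s,\phi}(\omega)\,d\overline{\mu_{s',\phi'}}(\omega')$$ satisfies $$W^{\mathrm{near}}_n(a)=q^{-n(1+is-i\overline{s'})}\big(W_{\phi,\phi'}(a_n)-\mathrm{PS}^\Gamma_{\phi,\phi'}(a_n)\big).$$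
   Context: Let $q\ge2$, $\mathfrak G$ the $(q+1)$-regular tree with vertex set $\mathfrak X$, graph distance $d$, boundary $\Omega$ (infinite non-backtracking edge chains modulo eventual equality up to shift, compact totally disconnected); $[x,\omega)$ is the ray from $x$ to $\omega$, $]\omega',\omega[$ the vertex set of the geodesic joining $\omega'\ne\omega$. Fix $o\in\mathfrak X$; $\langle x,\omega\rangle=d(o,y)-d(x,y)$ where $[o,\omega)\cap[x,\omega)=[y,\omega)$. $p_s(x,\omega)=q^{(\frac12+is)\langle x,\omega\rangle}$, $\chi(s)=\frac{\sqrt q}{q+1}(q^{is}+q^{-is})$, $\Delta f(x)=\frac1{q+1}\sum_{d(x,y)=1}f(y)$. $\mathcal D'(\Omega)$ is the algebraic dual of the locally constant functions on $\Omega$; integrals denote the action of (tensor products of) such distributions; $\overline\mu(f)=\overline{\mu(\overline f)}$; $\mathcal P_s\mu(x)=\int p_s(x,\omega)d\mu(\omega)$. $\Gamma$ is a discrete group of tree automorphisms acting freely on $\mathfrak X$ with finite quotient. $S\mathfrak X=\mathfrak X\times\Omega$ with diagonal $\Gamma$-action; $C^{\mathrm{lc}}(S\mathfrak X_\Gamma)$ = $\Gamma$-invariant locally constant functions on $S\mathfrak X$. $\Xi$ is a fixed locally constant compactly supported function on $S\mathfrak X$ with $\sum_{\gamma\in\Gamma}\Xi(\gamma x,\gamma\omega)=1$. $S_n=\{(x,\omega,\omega'):\omega\ne\omega',\ d(x,]\omega,\omega'[)\le n\}$ and $\mathbb 1_{S_n}$ its indicator. For $b\in C^{\mathrm{lc}}(S\mathfrak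 X_\Gamma)$: $W_{\phi,\phi'}(b)=\int_{\Omega\times\Omega}\sum_{x\in\mathfrak X}\Xi(x,\omega)b(x,\omega)p_s(x,\omega)p_{-\overline{s'}}(x,\omega')\,d\mu_{s,\phi}(\omega)d\overline{\mu_{s',\phi'}}(\omega')$ (the Wigner distribution, equal to $\sum_{\Gamma x}(\mathrm{Op}(b)\phi)(x)\overline{\phi'(x)}$ with $\mathrm{Op}(b)\phi(x)=\int p_s(x,\omega)b(x,\omega)d\mu_{s,\phi}(\omega)$), and $\mathrm{PS}^\Gamma_{\phi,\phi'}(b)=\int_{\Omega\times\Omega}\sum_{x\in]\omega',\omega[}\Xi(x,\omega)b(x,\omega)p_s(x,\omega)p_{-\overline{s'}}(x,\omega')\,d\mu_{s,\phi}(\omega)d\overline{\mu_{s',\phi'}}(\omega')$ (empty sum if $\omega=\omega'$). *)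

theory Defs
  imports "HOL-Analysis.Analysis"
begin

definition walk :: "('v \<Rightarrow> 'v \<Rightarrow> bool) \<Rightarrow> (nat \<Rightarrow> 'v) \<Rightarrow> nat \<Rightarrow> bool" where
  "walk E p n \<longleftrightarrow> (\<forall>i<n. E (p i) (p (Suc i)))"

definition nonbacktracking :: "(nat \<Rightarrow> 'v) \<Rightarrow> nat \<Rightarrow> bool" where
  "nonbacktracking p n \<longleftrightarrow> (\<forall>i. i + 2 \<le> n \<longrightarrow> p (i + 2) \<noteq> p i)"

definition regular_tree :: "nat \<Rightarrow> ('v \<Rightarrow> 'v \<Rightarrow> bool) \<Rightarrow> bool" where
  "regular_tree q E \<longleftrightarrow>
     (\<forall>x y. E x y \<longrightarrow> E y x) \<and> (\<forall>x. \<not> E x x) \<and>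
     (\<forall>x. finite {y. E x y} \<and> card {y. E x y} = q + 1) \<and>
     (\<forall>x y. \<exists>p n. walk E p n \<and> p 0 = x \<and> p n = y) \<and>
     (\<forall>p n. walk E p n \<and> nonbacktracking p n \<and> 1 \<le> n \<longrightarrow> p 0 \<noteq> p n)"

definition tdist :: "('v \<Rightarrow> 'v \<Rightarrow> bool) \<Rightarrow> 'v \<Rightarrow> 'v \<Rightarrow> nat" where
  "tdist E x y = (LEAST n. \<exists>p. walk E p n \<and> p 0 = x \<and> p n = y)"

definition is_ray :: "('v \<Rightarrow> 'v \<Rightarrow> bool) \<Rightarrow> (nat \<Rightarrow> 'v) \<Rightarrow> bool" where
  "is_ray E r \<longleftrightarrow> (\<forall>n. E (r n) (r (Suc n)) \<and> r (n + 2) \<noteq> r n)"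

definition ray_equiv :: "(nat \<Rightarrow> 'v) \<Rightarrow> (nat \<Rightarrow> 'v) \<Rightarrow> bool" where
  "ray_equiv r r' \<longleftrightarrow> (\<exists>k m. \<forall>n. r (n + k) = r' (n + m))"

type_synonym 'v bdry = "(nat \<Rightarrow> 'v) set"

definition boundary :: "('v \<Rightarrow> 'v \<Rightarrow> bool) \<Rightarrow> 'v bdry set" where
  "boundary E = {{r'. is_ray E r' \<and> ray_equiv r r'} | r. is_ray E r}"

text \<open>The ray from x to \<omega> and its vertex set [x,\<omega>).\<close>
definition ray_to :: "('v \<Rightarrow> 'v \<Rightarrow> bool) \<Rightarrow> 'v \<Rightarrow> 'v bdry \<Rightarrow> (nat \<Rightarrow> 'v)" where
  "ray_to E x \<omega> = (THE r. r \<in> \<omega> \<and> r 0 = x)"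

definition rayset :: "('v \<Rightarrow> 'v \<Rightarrow> bool) \<Rightarrow> 'v \<Rightarrow> 'v bdry \<Rightarrow> 'v set" where
  "rayset E x \<omega> = range (ray_to E x \<omega>)"

definition horo :: "('v \<Rightarrow> 'v \<Rightarrow> bool) \<Rightarrow> 'v \<Rightarrow> 'v \<Rightarrow> 'v bdry \<Rightarrow> int" where
  "horo E o' x \<omega> =
     (let y = (THE y. rayset E o' \<omega> \<inter> rayset E x \<omega> = rayset E y \<omega>)
      in int (tdist E o' y) - int (tdist E x y))"

text \<open>Vertex set of the geodesic ]\<omega>',\<omega>[ (empty if \<omega> = \<omega>').\<close>
definition geod :: "('v \<Rightarrow> 'v \<Rightarrow> bool) \<Rightarrow> 'v bdry \<Rightarrow> 'v bdry \<Rightarrow> 'v set" where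
  "geod E \<omega>' \<omega> =
     (if \<omega> = \<omega>' then {} else
      {v. \<exists>g :: int \<Rightarrow> 'v. (\<forall>k. E (g k) (g (k + 1)) \<and> g (k + 2) \<noteq> g k) \<and>
            (\<lambda>n. g (int n)) \<in> \<omega> \<and> (\<lambda>n. g (- int n)) \<in> \<omega>' \<and> v \<in> range g})"

text \<open>Cone topology: basic open sets, and locally constant functions on \<Omega>.\<close>
definition cone :: "('v \<Rightarrow> 'v \<Rightarrow> bool) \<Rightarrow> 'v \<Rightarrow> 'v \<Rightarrow> 'v bdry set" where
  "cone E x y = {\<omega> \<in> boundary E. y \<in> rayset E x \<omega>}"

definition loc_const :: "('v \<Rightarrow> 'v \<Rightarrow> bool) \<Rightarrow> ('v bdry \<Rightarrow> complex) \<Rightarrow> bool" where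
  "loc_const E f \<longleftrightarrow>
     (\<forall>\<omega>\<in>boundary E. \<exists>x y. \<omega> \<in> cone E x y \<and> (\<forall>\<eta>\<in>cone E x y. f \<eta> = f \<omega>))"

text \<open>Elements of the algebraic dual of the locally constant functions on \<Omega>.\<close>
definition distribution :: "('v \<Rightarrow> 'v \<Rightarrow> bool) \<Rightarrow> (('v bdry \<Rightarrow> complex) \<Rightarrow> complex) \<Rightarrow> bool" where
  "distribution E \<mu> \<longleftrightarrow>
     (\<forall>f g. loc_const E f \<and> (\<forall>\<omega>\<in>boundary E. f \<omega> = g \<omega>) \<longrightarrow> \<mu> f = \<mu> g) \<and>
     (\<forall>f g. loc_const E f \<and> loc_const E g \<longrightarrow> \<mu> (\<lambda>\<omega>. f \<omega> + g \<omega>) = \<mu> f + \<mu> g) \<and>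
     (\<forall>c f. loc_const E f \<longrightarrow> \<mu> (\<lambda>\<omega>. c * f \<omega>) = c * \<mu> f)"

text \<open>Conjugate distribution and tensor product (iterated action).\<close>
definition cdist :: "(('v bdry \<Rightarrow> complex) \<Rightarrow> complex) \<Rightarrow> ('v bdry \<Rightarrow> complex) \<Rightarrow> complex" where
  "cdist \<nu> f = cnj (\<nu> (\<lambda>\<omega>. cnj (f \<omega>)))"

definition tensor_int ::
  "(('v bdry \<Rightarrow> complex) \<Rightarrow> complex) \<Rightarrow> (('v bdry \<Rightarrow> complex) \<Rightarrow> complex)
    \<Rightarrow> ('v bdry \<Rightarrow> 'v bdry \<Rightarrow> complex) \<Rightarrow> complex" where
  "tensor_int \<mu> \<nu> F = \<mu> (\<lambda>\<omega>. \<nu> (\<lambda>\<omega>'. F \<omega> \<omega>'))"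

definition poisson :: "nat \<Rightarrow> ('v \<Rightarrow> 'v \<Rightarrow> bool) \<Rightarrow> 'v \<Rightarrow> complex \<Rightarrow> 'v \<Rightarrow> 'v bdry \<Rightarrow> complex" where
  "poisson q E o' s x \<omega> =
     exp ((1/2 + \<i> * s) * of_int (horo E o' x \<omega>) * of_real (ln (real q)))"

definition poisson_transform ::
  "nat \<Rightarrow> ('v \<Rightarrow> 'v \<Rightarrow> bool) \<Rightarrow> 'v \<Rightarrow> complex \<Rightarrow> (('v bdry \<Rightarrow> complex) \<Rightarrow> complex) \<Rightarrow> 'v \<Rightarrow> complex" where
  "poisson_transform q E o' s \<mu> x = \<mu> (\<lambda>\<omega>. poisson q E o' s x \<omega>)"

definition tree_laplacian :: "nat \<Rightarrow> ('v \<Rightarrow> 'v \<Rightarrow> bool) \<Rightarrow> ('v \<Rightarrow> complex) \<Rightarrow> 'v \<Rightarrow> complex" where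
  "tree_laplacian q E f x = (1 / of_nat (q + 1)) * (\<Sum>y\<in>{y. E x y}. f y)"

definition chi :: "nat \<Rightarrow> complex \<Rightarrow> complex" where
  "chi q s = of_real (sqrt (real q) / real (q + 1)) *
     (exp (\<i> * s * of_real (ln (real q))) + exp (- \<i> * s * of_real (ln (real q))))"

text \<open>\<mu> is THE boundary value of \<phi>: the (unique) distribution with Poisson transform \<phi>.\<close>
definition boundary_value ::
  "nat \<Rightarrow> ('v \<Rightarrow> 'v \<Rightarrow> bool) \<Rightarrow> 'v \<Rightarrow> complex \<Rightarrow> ('v \<Rightarrow> complex)
     \<Rightarrow> (('v bdry \<Rightarrow> complex) \<Rightarrow> complex) \<Rightarrow> bool" where
  "boundary_value q E o' s \<phi> \<mu> \<longleftrightarrow>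
     distribution E \<mu> \<and> (\<forall>x. poisson_transform q E o' s \<mu> x = \<phi> x) \<and>
     (\<forall>\<nu>. distribution E \<nu> \<and> (\<forall>x. poisson_transform q E o' s \<nu> x = \<phi> x)
          \<longrightarrow> (\<forall>f. loc_const E f \<longrightarrow> \<nu> f = \<mu> f))"

definition bact :: "('v \<Rightarrow> 'v) \<Rightarrow> 'v bdry \<Rightarrow> 'v bdry" where
  "bact \<gamma> \<omega> = (\<lambda>r. \<gamma> \<circ> r) ` \<omega>"

text \<open>A group of tree automorphisms acting freely on vertices with finite quotient.
  (Discreteness is automatic for a free action.)\<close>
definition tree_lattice :: "('v \<Rightarrow> 'v \<Rightarrow> bool) \<Rightarrow> ('v \<Rightarrow> 'v) set \<Rightarrow> bool" where
  "tree_lattice E \<Gamma> \<longleftrightarrow>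
     id \<in> \<Gamma> \<and> (\<forall>\<gamma>\<in>\<Gamma>. \<forall>\<delta>\<in>\<Gamma>. \<gamma> \<circ> \<delta> \<in> \<Gamma>) \<and>
     (\<forall>\<gamma>\<in>\<Gamma>. bij \<gamma> \<and> inv \<gamma> \<in> \<Gamma> \<and> (\<forall>x y. E (\<gamma> x) (\<gamma> y) \<longleftrightarrow> E x y)) \<and>
     (\<forall>\<gamma>\<in>\<Gamma>. \<forall>x. \<gamma> x = x \<longrightarrow> \<gamma> = id) \<and>
     finite ((\<lambda>x. (\<lambda>\<gamma>. \<gamma> x) ` \<Gamma>) ` UNIV)"

text \<open>Locally constant compactly supported \<Xi> on S X with \<Sum>_\<gamma> \<Xi>(\<gamma>x,\<gamma>\<omega>) = 1
  (the sum is over the finitely many \<gamma> with nonzero term).\<close>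
definition cutoff :: "('v \<Rightarrow> 'v \<Rightarrow> bool) \<Rightarrow> ('v \<Rightarrow> 'v) set \<Rightarrow> ('v \<Rightarrow> 'v bdry \<Rightarrow> complex) \<Rightarrow> bool" where
  "cutoff E \<Gamma> \<Xi> \<longleftrightarrow>
     finite {x. \<exists>\<omega>\<in>boundary E. \<Xi> x \<omega> \<noteq> 0} \<and> (\<forall>x. loc_const E (\<Xi> x)) \<and>
     (\<forall>x. \<forall>\<omega>\<in>boundary E.
        (\<Sum>\<gamma>\<in>{\<gamma>\<in>\<Gamma>. \<Xi> (\<gamma> x) (bact \<gamma> \<omega>) \<noteq> 0}. \<Xi> (\<gamma> x) (bact \<gamma> \<omega>)) = 1)"

text \<open>C^lc(S X_\<Gamma>): \<Gamma>-invariant locally constant functions on X \<times> \<Omega>.\<close>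
definition lc_inv :: "('v \<Rightarrow> 'v \<Rightarrow> bool) \<Rightarrow> ('v \<Rightarrow> 'v) set \<Rightarrow> ('v \<Rightarrow> 'v bdry \<Rightarrow> complex) \<Rightarrow> bool" where
  "lc_inv E \<Gamma> b \<longleftrightarrow> (\<forall>x. loc_const E (b x)) \<and>
     (\<forall>\<gamma>\<in>\<Gamma>. \<forall>x. \<forall>\<omega>\<in>boundary E. b (\<gamma> x) (bact \<gamma> \<omega>) = b x \<omega>)"

definition shift_sum :: "('v \<Rightarrow> 'v \<Rightarrow> bool) \<Rightarrow> nat \<Rightarrow> ('v \<Rightarrow> 'v bdry \<Rightarrow> complex) \<Rightarrow> 'v \<Rightarrow> 'v bdry \<Rightarrow> complex" where
  "shift_sum E n a x \<omega> = (\<Sum>y\<in>{y. tdist E y x = n \<and> x \<in> rayset E y \<omega>}. a y \<omega>)"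

definition in_S :: "('v \<Rightarrow> 'v \<Rightarrow> bool) \<Rightarrow> nat \<Rightarrow> 'v \<Rightarrow> 'v bdry \<Rightarrow> 'v bdry \<Rightarrow> bool" where
  "in_S E n x \<omega> \<omega>' \<longleftrightarrow> \<omega> \<noteq> \<omega>' \<and> (\<exists>z\<in>geod E \<omega> \<omega>'. tdist E x z \<le> n)"

definition wigner ::
  "nat \<Rightarrow> ('v \<Rightarrow> 'v \<Rightarrow> bool) \<Rightarrow> 'v \<Rightarrow> ('v \<Rightarrow> 'v bdry \<Rightarrow> complex) \<Rightarrow> complex \<Rightarrow> complex
    \<Rightarrow> (('v bdry \<Rightarrow> complex) \<Rightarrow> complex) \<Rightarrow> (('v bdry \<Rightarrow> complex) \<Rightarrow> complex)
    \<Rightarrow> ('v \<Rightarrow> 'v bdry \<Rightarrow> complex) \<Rightarrow> complex" where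
  "wigner q E o' \<Xi> s s' \<mu> \<mu>' b =
     tensor_int \<mu> (cdist \<mu>') (\<lambda>\<omega> \<omega>'.
       \<Sum>x\<in>{x. \<Xi> x \<omega> \<noteq> 0}.
         \<Xi> x \<omega> * b x \<omega> * poisson q E o' s x \<omega> * poisson q E o' (- cnj s') x \<omega>')"

definition patterson_sullivan ::
  "nat \<Rightarrow> ('v \<Rightarrow> 'v \<Rightarrow> bool) \<Rightarrow> 'v \<Rightarrow> ('v \<Rightarrow> 'v bdry \<Rightarrow> complex) \<Rightarrow> complex \<Rightarrow> complex
    \<Rightarrow> (('v bdry \<Rightarrow> complex) \<Rightarrow> complex) \<Rightarrow> (('v bdry \<Rightarrow> complex) \<Rightarrow> complex)
    \<Rightarrow> ('v \<Rightarrow> 'v bdry \<Rightarrow> complex) \<Rightarrow> complex" where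
  "patterson_sullivan q E o' \<Xi> s s' \<mu> \<mu>' b =
     tensor_int \<mu> (cdist \<mu>') (\<lambda>\<omega> \<omega>'.
       \<Sum>x\<in>{x\<in>geod E \<omega>' \<omega>. \<Xi> x \<omega> \<noteq> 0}.
         \<Xi> x \<omega> * b x \<omega> * poisson q E o' s x \<omega> * poisson q E o' (- cnj s') x \<omega>')"

definition wigner_near ::
  "nat \<Rightarrow> ('v \<Rightarrow> 'v \<Rightarrow> bool) \<Rightarrow> 'v \<Rightarrow> ('v \<Rightarrow> 'v bdry \<Rightarrow> complex) \<Rightarrow> complex \<Rightarrow> complex
    \<Rightarrow> (('v bdry \<Rightarrow> complex) \<Rightarrow> complex) \<Rightarrow> (('v bdry \<Rightarrow> complex) \<Rightarrow> complex)
    \<Rightarrow> nat \<Rightarrow> ('v \<Rightarrow> 'v bdry \<Rightarrow> complex) \<Rightarrow> complex" where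
  "wigner_near q E o' \<Xi> s s' \<mu> \<mu>' n a =
     tensor_int \<mu> (cdist \<mu>') (\<lambda>\<omega> \<omega>'.
       \<Sum>x\<in>{x. \<Xi> x \<omega> \<noteq> 0}.
         (1 - (if in_S E n x \<omega> \<omega>' then 1 else 0)) *
         \<Xi> x \<omega> * a x \<omega> * poisson q E o' s x \<omega> * poisson q E o' (- cnj s') x \<omega>')"

end

theory Submission
  imports Defs
begin

text \<open>
  For \<open>x\<close> in the support of \<open>\<Xi>\<close>, the factor \<open>1 - \<one>(S\<^sub>n)\<close> is the indicator that the rays
  \<open>[x,\<omega>)\<close> and \<open>[x,\<omega>')\<close> share their first \<open>n + 1\<close> edges. As the boundary values are
  \<open>\<Gamma>\<close>-equivariant, the integral does not change when \<open>\<Xi>\<close> is replaced by the cutoff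
  \<open>(y, \<omega>) \<mapsto> \<Xi>(y\<^sub>n, \<omega>)\<close>, where \<open>y\<^sub>n\<close> is the \<open>n\<close>-th vertex of \<open>[y,\<omega>)\<close>. Grouping the vertices \<open>y\<close>
  by \<open>z = y\<^sub>n\<close> turns the sum into one over \<open>z\<close>: the Poisson kernels at \<open>y\<close> and at \<open>z\<close> differ by
  the constant factor of the theorem, the values \<open>a(y, \<omega>)\<close> add up to \<open>a\<^sub>n(z, \<omega>)\<close>, and the rays from
  \<open>y\<close> share \<open>n + 1\<close> edges iff those from \<open>z\<close> share one, i.e. iff \<open>z \<notin> ]\<omega>',\<omega>[\<close>. What remains
  is \<open>W(a\<^sub>n) - PS(a\<^sub>n)\<close>.

  All integrands are finite sums of products of locally constant functions of \<open>\<omega>\<close> and \<open>\<omega>'\<close>,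
  on which the distributions act linearly.
\<close>

locale locally_finite_tree =
  fixes E :: "'v \<Rightarrow> 'v \<Rightarrow> bool"
  assumes edge_sym: "E x y \<Longrightarrow> E y x"
    and locally_finite: "finite {y. E x y}"
    and connected: "\<exists>p n. walk E p n \<and> p 0 = x \<and> p n = y"
    and no_cycle: "walk E p n \<Longrightarrow> nonbacktracking p n \<Longrightarrow> 1 \<le> n \<Longrightarrow> p 0 \<noteq> p n"

lemma regular_tree_locally_finite_tree: "regular_tree q E \<Longrightarrow> locally_finite_tree E"
  unfolding regular_tree_def by unfold_locales blast+

lemma walk_mono: "walk E p k \<Longrightarrow> j \<le> k \<Longrightarrow> walk E p j"
  unfolding walk_def by auto

lemma is_ray_walk: "is_ray E r \<Longrightarrow> walk E r k"
  unfolding is_ray_def walk_def by auto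

lemma is_ray_nonbacktracking: "is_ray E r \<Longrightarrow> nonbacktracking r k"
  unfolding is_ray_def nonbacktracking_def by auto

lemma is_ray_shift: "is_ray E r \<Longrightarrow> is_ray E (\<lambda>i. r (i + a))"
  unfolding is_ray_def by (auto simp: add.commute add.left_commute)

lemma ray_equiv_refl: "ray_equiv r r"
  unfolding ray_equiv_def by blast

lemma ray_equiv_sym: "ray_equiv r r' \<Longrightarrow> ray_equiv r' r"
  unfolding ray_equiv_def by metis

lemma ray_equiv_trans:
  assumes "ray_equiv r r'" "ray_equiv r' r''"
  shows "ray_equiv r r''"
proof -
  obtain k m k' m' where a: "\<forall>n. r (n + k) = r' (n + m)" and b: "\<forall>n. r' (n + k') = r'' (n + m')"
    using assms unfolding ray_equiv_def by blast
  have "r (n + (k + k')) = r'' (n + (m + m'))" for n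
    using a[rule_format, of "n + k'"] b[rule_format, of "n + m"] by (simp add: ac_simps)
  then show ?thesis unfolding ray_equiv_def by blast
qed

lemma ray_equiv_shift: "ray_equiv r (\<lambda>i. r (i + k))"
  unfolding ray_equiv_def by (rule exI[of _ k], rule exI[of _ 0]) simp

lemma nonbacktracking_join:
  assumes "nonbacktracking p k" "nonbacktracking p' k'" "p k = p' k'"
    and "0 < k \<Longrightarrow> 0 < k' \<Longrightarrow> p (k - 1) \<noteq> p' (k' - 1)"
  shows "nonbacktracking (\<lambda>i. if i \<le> k then p i else p' (k + k' - i)) (k + k')"
  unfolding nonbacktracking_def
proof (intro allI impI)
  fix i assume i: "i + 2 \<le> k + k'"
  consider "i + 2 \<le> k" | "k \<le> i" | "i + 1 = k" by arith
  then show "(if i + 2 \<le> k then p (i + 2) else p' (k + k' - (i + 2))) \<noteq>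
    (if i \<le> k then p i else p' (k + k' - i))"
  proof cases
    case 1
    then show ?thesis using assms(1) unfolding nonbacktracking_def by auto
  next
    case 2
    have "k + k' - (i + 2) + 2 \<le> k'" "k + k' - (i + 2) + 2 = k + k' - i" using 2 i by arith+
    moreover have "p' (k + k' - (i + 2) + 2) \<noteq> p' (k + k' - (i + 2))"
      using assms(2) calculation(1) unfolding nonbacktracking_def by blast
    ultimately show ?thesis using 2 assms(3) by (cases "i = k") auto
  next
    case 3
    then have "k + k' - (i + 2) = k' - 1" "i = k - 1" "0 < k" "0 < k'" using i by arith+
    then show ?thesis using assms(4) by auto
  qed
qed

lemma tdist_le_walk: "walk E p n \<Longrightarrow> tdist E (p 0) (p n) \<le> n"
  unfolding tdist_def by (rule Least_le) blast

lemma is_ray_append: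
  assumes "walk E p k" "nonbacktracking p k" "is_ray E r" "p k = r 0"
    and "0 < k \<Longrightarrow> p (k - 1) \<noteq> r 1"
  shows "is_ray E (\<lambda>i. if i \<le> k then p i else r (i - k))"
  unfolding is_ray_def
proof (intro allI conjI)
  fix i
  have rk: "(if j \<le> k then p j else r (j - k)) = r (j - k)" if "k \<le> j" for j
    using that assms(4) by (cases "j = k") auto
  show "E (if i \<le> k then p i else r (i - k)) (if Suc i \<le> k then p (Suc i) else r (Suc i - k))"
  proof (cases "i < k")
    case True then show ?thesis using assms(1) unfolding walk_def by auto
  next
    case False
    then have "E (r (i - k)) (r (Suc (i - k)))" "Suc (i - k) = Suc i - k"
      using assms(3) unfolding is_ray_def by auto
    then show ?thesis using rk[of i] rk[of "Suc i"] False by auto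
  qed
  consider "i + 2 \<le> k" | "k \<le> i" | "i + 1 = k" by arith
  then show "(if i + 2 \<le> k then p (i + 2) else r (i + 2 - k)) \<noteq> (if i \<le> k then p i else r (i - k))"
  proof cases
    case 1 then show ?thesis using assms(2) unfolding nonbacktracking_def by auto
  next
    case 2
    then have "r (i - k + 2) \<noteq> r (i - k)" "i - k + 2 = i + 2 - k"
      using assms(3) unfolding is_ray_def by auto
    then show ?thesis using rk[of i] 2 by auto
  next
    case 3
    then show ?thesis using assms(5) by auto
  qed
qed

lemma boundary_is_ray: "\<omega> \<in> boundary E \<Longrightarrow> r \<in> \<omega> \<Longrightarrow> is_ray E r"
  unfolding boundary_def by auto

lemma boundary_ray_equiv: "\<omega> \<in> boundary E \<Longrightarrow> r \<in> \<omega> \<Longrightarrow> r' \<in> \<omega> \<Longrightarrow> ray_equiv r r'"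
  unfolding boundary_def by (auto intro: ray_equiv_trans ray_equiv_sym)

lemma boundary_closed:
  "\<omega> \<in> boundary E \<Longrightarrow> r \<in> \<omega> \<Longrightarrow> is_ray E r' \<Longrightarrow> ray_equiv r r' \<Longrightarrow> r' \<in> \<omega>"
  unfolding boundary_def by (auto intro: ray_equiv_trans ray_equiv_sym)

lemma boundary_nonempty: "\<omega> \<in> boundary E \<Longrightarrow> \<exists>r. r \<in> \<omega>"
  unfolding boundary_def by (auto intro: ray_equiv_refl)

context locally_finite_tree
begin

lemma walk_join:
  assumes "walk E p k" "walk E p' k'" "p k = p' k'"
  shows "walk E (\<lambda>i. if i \<le> k then p i else p' (k + k' - i)) (k + k')"
  unfolding walk_def
proof (intro allI impI)
  fix i assume i: "i < k + k'"
  show "E (if i \<le> k then p i else p' (k + k' - i))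
    (if Suc i \<le> k then p (Suc i) else p' (k + k' - Suc i))"
  proof (cases "i < k")
    case True
    then show ?thesis using assms(1) unfolding walk_def by auto
  next
    case False
    then have "E (p' (k + k' - Suc i)) (p' (Suc (k + k' - Suc i)))"
      using assms(2) i unfolding walk_def by auto
    moreover have "Suc (k + k' - Suc i) = k + k' - i" using i by arith
    ultimately show ?thesis using False assms(3) edge_sym by (cases "i = k") auto
  qed
qed

lemma nonbacktracking_walk_unique:
  assumes "walk E p k" "nonbacktracking p k" "walk E p' k'" "nonbacktracking p' k'"
    "p 0 = p' 0" "p k = p' k'"
  shows "k = k' \<and> (\<forall>i\<le>k. p i = p' i)"
  using assms
proof (induction "k + k'" arbitrary: k k' rule: less_induct)
  case less
  show ?case
  proof (cases "k = 0 \<or> k' = 0")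
    case True
    have "k = 0 \<longleftrightarrow> k' = 0"
    proof
      assume "k = 0"
      then have "p' 0 = p' k'" using less.prems(5,6) by simp
      then show "k' = 0" using no_cycle[of p' k'] less.prems(3,4) by (cases k') auto
    next
      assume "k' = 0"
      then have "p 0 = p k" using less.prems(5,6) by simp
      then show "k = 0" using no_cycle[of p k] less.prems(1,2) by (cases k) auto
    qed
    then show ?thesis using True less.prems by auto
  next
    case False
    then obtain a b where k: "k = Suc a" "k' = Suc b" by (cases k; cases k') auto
    show ?thesis
    proof (cases "p a = p' b")
      case True
      have "walk E p a" "nonbacktracking p a" "walk E p' b" "nonbacktracking p' b"
        using less.prems k by (simp_all add: walk_def nonbacktracking_def)
      with less.hyps[of a b] True less.prems have "a = b" "\<forall>i\<le>a. p i = p' i" using k by auto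
      then show ?thesis using k less.prems(6) by (auto simp: le_Suc_eq)
    next
      case False
      let ?r = "\<lambda>i. if i \<le> k then p i else p' (k + k' - i)"
      have "walk E ?r (k + k')" "nonbacktracking ?r (k + k')"
        using walk_join[of p k p' k'] nonbacktracking_join[of p k p' k'] less.prems False k by auto
      moreover have "?r 0 = ?r (k + k')" using less.prems(5) k by simp
      moreover have "1 \<le> k + k'" using k by simp
      ultimately show ?thesis using no_cycle by blast
    qed
  qed
qed

lemma obtain_walk_tdist:
  obtains p where "walk E p (tdist E x y)" "p 0 = x" "p (tdist E x y) = y"
proof -
  have "\<exists>n p. walk E p n \<and> p 0 = x \<and> p n = y" using connected by blast
  then have "\<exists>p. walk E p (tdist E x y) \<and> p 0 = x \<and> p (tdist E x y) = y"
    unfolding tdist_def by (rule LeastI_ex)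
  then show ?thesis using that by blast
qed

text \<open>A shortest walk cannot backtrack: cutting out a backtrack would shorten it by 2.\<close>

lemma obtain_geodesic:
  obtains p where "walk E p (tdist E x y)" "nonbacktracking p (tdist E x y)"
    "p 0 = x" "p (tdist E x y) = y"
proof -
  define d where "d = tdist E x y"
  obtain p where p: "walk E p d" "p 0 = x" "p d = y"
    unfolding d_def by (rule obtain_walk_tdist)
  have "nonbacktracking p d"
    unfolding nonbacktracking_def
  proof (intro allI impI notI)
    fix i assume i: "i + 2 \<le> d" and eq: "p (i + 2) = p i"
    define p' where "p' j = (if j \<le> i then p j else p (j + 2))" for j
    have "walk E p' (d - 2)"
      unfolding walk_def
    proof (intro allI impI)
      fix j assume j: "j < d - 2"
      show "E (p' j) (p' (Suc j))"
      proof (cases "j < i")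
        case True then show ?thesis using p(1) i unfolding p'_def walk_def by auto
      next
        case False
        then have "E (p (j + 2)) (p (Suc (j + 2)))" using p(1) j unfolding walk_def by auto
        then show ?thesis using False eq unfolding p'_def by (cases "j = i") auto
      qed
    qed
    moreover have "p' 0 = x" using p unfolding p'_def by simp
    moreover have "p' (d - 2) = y"
    proof (cases "d - 2 \<le> i")
      case True
      then have "d = i + 2" using i by arith
      then show ?thesis using p eq unfolding p'_def by simp
    next
      case False
      moreover have "Suc (Suc (d - 2)) = d" using i by arith
      ultimately show ?thesis using p unfolding p'_def by simp
    qed
    ultimately have "tdist E x y \<le> d - 2" using tdist_le_walk by metis
    then show False using i unfolding d_def by auto
  qed
  then show ?thesis using that p d_def by blast
qed

lemma tdist_nonbacktracking:
  assumes "walk E p k" "nonbacktracking p k"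
  shows "tdist E (p 0) (p k) = k"
proof -
  obtain p' where "walk E p' (tdist E (p 0) (p k))" "nonbacktracking p' (tdist E (p 0) (p k))"
    "p' 0 = p 0" "p' (tdist E (p 0) (p k)) = p k" by (rule obtain_geodesic)
  from nonbacktracking_walk_unique[OF assms this(1,2)] this(3,4) show ?thesis by auto
qed

lemma tdist_sym: "tdist E x y = tdist E y x"
proof -
  have "tdist E y x \<le> tdist E x y" for x y
  proof -
    define d where "d = tdist E x y"
    obtain p where p: "walk E p d" "p 0 = x" "p d = y"
      unfolding d_def by (rule obtain_walk_tdist)
    have "walk E (\<lambda>i. p (d - i)) d"
      unfolding walk_def
    proof (intro allI impI)
      fix i assume "i < d"
      then have "E (p (d - Suc i)) (p (Suc (d - Suc i)))" "Suc (d - Suc i) = d - i"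
        using p(1) unfolding walk_def by auto
      then show "E (p (d - i)) (p (d - Suc i))" using edge_sym by auto
    qed
    from tdist_le_walk[OF this] show ?thesis using p unfolding d_def by auto
  qed
  then show ?thesis by (simp add: order_antisym)
qed

lemma tdist_eq_0_iff: "tdist E x y = 0 \<longleftrightarrow> x = y"
proof
  show "tdist E x y = 0 \<Longrightarrow> x = y" using obtain_walk_tdist[of x y] by metis
  show "x = y \<Longrightarrow> tdist E x y = 0" using tdist_le_walk[of E "\<lambda>_. x" 0] unfolding walk_def by auto
qed

lemma finite_tdist_ball: "finite {y. tdist E x y \<le> k}"
proof (induction k)
  case 0
  then show ?case using tdist_eq_0_iff[of x] by simp
next
  case (Suc k)
  have "{y. tdist E x y \<le> Suc k} \<subseteq> {y. tdist E x y \<le> k} \<union> (\<Union>z\<in>{y. tdist E x y \<le> k}. {w. E z w})"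
  proof
    fix y assume y: "y \<in> {y. tdist E x y \<le> Suc k}"
    show "y \<in> {y. tdist E x y \<le> k} \<union> (\<Union>z\<in>{y. tdist E x y \<le> k}. {w. E z w})"
    proof (cases "tdist E x y = Suc k")
      case True
      obtain p where p: "walk E p (tdist E x y)" "p 0 = x" "p (tdist E x y) = y"
        by (rule obtain_walk_tdist)
      have "tdist E x (p k) \<le> k" using tdist_le_walk[OF walk_mono[OF p(1)], of k] p(2) True by simp
      moreover have "E (p k) y" using p True unfolding walk_def by auto
      ultimately show ?thesis by blast
    qed (use y in auto)
  qed
  moreover have "finite (\<Union>z\<in>{y. tdist E x y \<le> k}. {w. E z w})"
    using Suc locally_finite by auto
  ultimately show ?case using Suc by (meson finite_UnI finite_subset)
qed

lemma tdist_ray: "is_ray E r \<Longrightarrow> tdist E (r 0) (r k) = k"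
  using tdist_nonbacktracking is_ray_walk is_ray_nonbacktracking by blast

lemma boundary_ray_unique:
  assumes "\<omega> \<in> boundary E" "r \<in> \<omega>" "r' \<in> \<omega>" "r 0 = r' 0"
  shows "r = r'"
proof
  have rr: "is_ray E r" "is_ray E r'" using assms boundary_is_ray by auto
  obtain k m where km: "\<forall>n. r (n + k) = r' (n + m)"
    using boundary_ray_equiv[OF assms(1-3)] unfolding ray_equiv_def by blast
  have "k = m" "\<forall>i\<le>k. r i = r' i"
    using nonbacktracking_walk_unique[of r k r' m] km[rule_format, of 0] rr assms(4)
    by (auto intro: is_ray_walk is_ray_nonbacktracking)
  fix i
  show "r i = r' i"
  proof (cases "i \<le> k")
    case False
    then show ?thesis using km[rule_format, of "i - k"] \<open>k = m\<close> by simp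
  qed (use \<open>\<forall>i\<le>k. r i = r' i\<close> in auto)
qed

text \<open>The ray from \<open>x\<close> to \<open>\<omega>\<close>: walk from \<open>x\<close> to a nearest vertex of some ray in \<open>\<omega>\<close>,
  then follow that ray.\<close>

lemma boundary_ray_from:
  assumes "\<omega> \<in> boundary E"
  shows "\<exists>r\<in>\<omega>. r 0 = x"
proof -
  obtain r0 where r0: "r0 \<in> \<omega>" using boundary_nonempty[OF assms] by blast
  have rr0: "is_ray E r0" using boundary_is_ray[OF assms r0] .
  define k0 where "k0 = (ARG_MIN (\<lambda>k. tdist E x (r0 k)) k. True)"
  have k0: "tdist E x (r0 k0) \<le> tdist E x (r0 k)" for k
    unfolding k0_def by (rule arg_min_nat_le) simp
  define d where "d = tdist E x (r0 k0)"
  obtain p where p: "walk E p d" "nonbacktracking p d" "p 0 = x" "p d = r0 k0"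
    unfolding d_def by (rule obtain_geodesic)
  let ?s = "\<lambda>i. r0 (i + k0)"
  have junction: "p (d - 1) \<noteq> ?s 1" if "0 < d"
  proof
    assume "p (d - 1) = ?s 1"
    then have "tdist E x (r0 (k0 + 1)) \<le> d - 1"
      using tdist_le_walk[OF walk_mono[OF p(1)], of "d - 1"] p(3) by (simp add: add.commute)
    then show False using k0[of "k0 + 1"] that unfolding d_def by simp
  qed
  let ?r = "\<lambda>i. if i \<le> d then p i else ?s (i - d)"
  have "is_ray E ?r"
    using is_ray_append[OF p(1,2) is_ray_shift[OF rr0] _ junction] p(4) by simp
  moreover have "ray_equiv r0 ?r"
    unfolding ray_equiv_def by (rule exI[of _ k0], rule exI[of _ d]) (auto simp: p(4))
  ultimately have "?r \<in> \<omega>" using boundary_closed[OF assms r0] by blast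
  then show ?thesis using p(3) by (intro bexI[of _ ?r]) auto
qed

lemma boundary_ray_from_ex1: "\<omega> \<in> boundary E \<Longrightarrow> \<exists>!r. r \<in> \<omega> \<and> r 0 = x"
  using boundary_ray_from boundary_ray_unique by metis

lemma ray_to_mem: "\<omega> \<in> boundary E \<Longrightarrow> ray_to E x \<omega> \<in> \<omega>"
  and ray_to_0 [simp]: "\<omega> \<in> boundary E \<Longrightarrow> ray_to E x \<omega> 0 = x"
  using theI'[OF boundary_ray_from_ex1[of \<omega> x]] unfolding ray_to_def by auto

lemma ray_to_eqI: "\<omega> \<in> boundary E \<Longrightarrow> r \<in> \<omega> \<Longrightarrow> r 0 = x \<Longrightarrow> ray_to E x \<omega> = r"
  using ray_to_mem ray_to_0 boundary_ray_unique by metis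

lemma is_ray_ray_to: "\<omega> \<in> boundary E \<Longrightarrow> is_ray E (ray_to E x \<omega>)"
  using ray_to_mem boundary_is_ray by blast

lemma ray_to_edge: "\<omega> \<in> boundary E \<Longrightarrow> E (ray_to E x \<omega> i) (ray_to E x \<omega> (Suc i))"
  and ray_to_no_backtrack: "\<omega> \<in> boundary E \<Longrightarrow> ray_to E x \<omega> (i + 2) \<noteq> ray_to E x \<omega> i"
  using is_ray_ray_to unfolding is_ray_def by blast+

lemma ray_to_add:
  assumes "\<omega> \<in> boundary E"
  shows "ray_to E x \<omega> (k + j) = ray_to E (ray_to E x \<omega> k) \<omega> j"
proof -
  let ?r = "ray_to E x \<omega>"
  have "(\<lambda>i. ?r (i + k)) \<in> \<omega>"
    using boundary_closed[OF assms ray_to_mem[OF assms]] is_ray_shift[OF is_ray_ray_to[OF assms]]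
      ray_equiv_shift by blast
  then have "ray_to E (?r k) \<omega> = (\<lambda>i. ?r (i + k))" using ray_to_eqI[OF assms] by simp
  then show ?thesis by (simp add: add.commute)
qed

lemma tdist_ray_to: "\<omega> \<in> boundary E \<Longrightarrow> tdist E x (ray_to E x \<omega> k) = k"
  using tdist_ray[OF is_ray_ray_to] ray_to_0 by metis

lemma ray_to_inj: "\<omega> \<in> boundary E \<Longrightarrow> ray_to E x \<omega> i = ray_to E x \<omega> j \<Longrightarrow> i = j"
  using tdist_ray_to by metis

lemma ray_to_prefix:
  assumes "\<omega> \<in> boundary E" "\<eta> \<in> boundary E" "ray_to E x \<omega> k = ray_to E x \<eta> k" "j \<le> k"
  shows "ray_to E x \<omega> j = ray_to E x \<eta> j"
  using nonbacktracking_walk_unique[of "ray_to E x \<omega>" k "ray_to E x \<eta>" k] assms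
  by (auto intro: is_ray_walk is_ray_nonbacktracking is_ray_ray_to)

lemma ray_to_append:
  assumes "\<omega> \<in> boundary E" "walk E p k" "nonbacktracking p k" "p k = z"
    "0 < k \<Longrightarrow> p (k - 1) \<noteq> ray_to E z \<omega> 1"
  shows "ray_to E (p 0) \<omega> i = (if i \<le> k then p i else ray_to E z \<omega> (i - k))"
proof -
  let ?r = "\<lambda>i. if i \<le> k then p i else ray_to E z \<omega> (i - k)"
  have "p k = ray_to E z \<omega> 0" using assms(1,4) by simp
  then have "is_ray E ?r"
    using is_ray_append[OF assms(2,3) is_ray_ray_to[OF assms(1)]] assms(5) by blast
  moreover have "ray_equiv (ray_to E z \<omega>) ?r"
    unfolding ray_equiv_def by (rule exI[of _ 0], rule exI[of _ k]) (auto simp: assms(1,4))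
  ultimately have "?r \<in> \<omega>" using boundary_closed[OF assms(1) ray_to_mem[OF assms(1)]] by blast
  then show ?thesis using ray_to_eqI[OF assms(1)] by simp
qed

lemma ray_to_meet: "\<omega> \<in> boundary E \<Longrightarrow> \<exists>k m. ray_to E a \<omega> k = ray_to E b \<omega> m"
  using boundary_ray_equiv[OF _ ray_to_mem ray_to_mem, of \<omega> E a b]
  unfolding ray_equiv_def by (metis add_0)

lemma ray_to_meet_add:
  "\<omega> \<in> boundary E \<Longrightarrow> ray_to E a \<omega> k = ray_to E b \<omega> m \<Longrightarrow>
   ray_to E a \<omega> (k + j) = ray_to E b \<omega> (m + j)"
  using ray_to_add by metis

lemma rayset_ray_to:
  "\<omega> \<in> boundary E \<Longrightarrow> rayset E (ray_to E x \<omega> k) \<omega> = range (\<lambda>j. ray_to E x \<omega> (k + j))"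
  unfolding rayset_def using ray_to_add by auto

lemma rayset_inj:
  assumes "\<omega> \<in> boundary E" "rayset E y' \<omega> = rayset E y \<omega>"
  shows "y' = y"
proof -
  have "y' \<in> rayset E y \<omega>"
    using assms ray_to_0[OF assms(1), of y'] unfolding rayset_def by (metis rangeI)
  then obtain i where i: "y' = ray_to E y \<omega> i" unfolding rayset_def by auto
  have "y \<in> rayset E y' \<omega>" using assms ray_to_0[OF assms(1), of y] unfolding rayset_def by (metis rangeI)
  then obtain j where "ray_to E y \<omega> 0 = ray_to E y \<omega> (i + j)"
    using rayset_ray_to[OF assms(1), of y i] i assms(1) by auto
  then have "i = 0" using ray_to_inj[OF assms(1)] by force
  then show ?thesis using i assms(1) by simp
qed

lemma ray_to_first_meet:
  assumes "\<omega> \<in> boundary E" "ray_to E a \<omega> k = ray_to E b \<omega> m"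
  obtains k0 m0 where "ray_to E a \<omega> k0 = ray_to E b \<omega> m0" "int k0 - int m0 = int k - int m"
    "k0 = 0 \<or> m0 = 0 \<or> ray_to E a \<omega> (k0 - 1) \<noteq> ray_to E b \<omega> (m0 - 1)"
  using assms(2)
proof (induction k arbitrary: m thesis)
  case 0 then show ?case by blast
next
  case (Suc k)
  show ?case
  proof (cases "m = 0 \<or> ray_to E a \<omega> k \<noteq> ray_to E b \<omega> (m - 1)")
    case True then show ?thesis using Suc.prems by fastforce
  next
    case False
    then have meet: "ray_to E a \<omega> k = ray_to E b \<omega> (m - 1)" and "int (m - 1) = int m - 1" by auto
    show ?thesis
    proof (rule Suc.IH[OF _ meet])
      fix k0 m0 assume "ray_to E a \<omega> k0 = ray_to E b \<omega> m0" "int k0 - int m0 = int k - int (m - 1)"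
        "k0 = 0 \<or> m0 = 0 \<or> ray_to E a \<omega> (k0 - 1) \<noteq> ray_to E b \<omega> (m0 - 1)"
      then show ?thesis using Suc.prems(1) \<open>int (m - 1) = int m - 1\<close> by simp
    qed
  qed
qed

lemma rayset_inter_first_meet:
  assumes \<omega>: "\<omega> \<in> boundary E" and meet: "ray_to E a \<omega> k0 = ray_to E b \<omega> m0"
    and first: "k0 = 0 \<or> m0 = 0 \<or> ray_to E a \<omega> (k0 - 1) \<noteq> ray_to E b \<omega> (m0 - 1)"
  shows "rayset E a \<omega> \<inter> rayset E b \<omega> = rayset E (ray_to E a \<omega> k0) \<omega>"
proof
  show "rayset E (ray_to E a \<omega> k0) \<omega> \<subseteq> rayset E a \<omega> \<inter> rayset E b \<omega>"
  proof
    fix v assume "v \<in> rayset E (ray_to E a \<omega> k0) \<omega>"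
    then obtain j where "v = ray_to E a \<omega> (k0 + j)" "v = ray_to E b \<omega> (m0 + j)"
      using rayset_ray_to[OF \<omega>] ray_to_meet_add[OF \<omega> meet] by auto
    then show "v \<in> rayset E a \<omega> \<inter> rayset E b \<omega>" unfolding rayset_def by blast
  qed
next
  show "rayset E a \<omega> \<inter> rayset E b \<omega> \<subseteq> rayset E (ray_to E a \<omega> k0) \<omega>"
  proof
    fix v assume "v \<in> rayset E a \<omega> \<inter> rayset E b \<omega>"
    then obtain i j where ij: "v = ray_to E a \<omega> i" "v = ray_to E b \<omega> j" unfolding rayset_def by blast
    have "k0 \<le> i"
    proof (rule ccontr)
      assume "\<not> k0 \<le> i"
      then have lt: "i < k0" by simp
      have "ray_to E b \<omega> (j + (k0 - i)) = ray_to E b \<omega> m0"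
        using ray_to_meet_add[OF \<omega>, of a i b j "k0 - i"] ij lt meet by simp
      then have m0: "j + (k0 - i) = m0" using ray_to_inj[OF \<omega>] by blast
      have "ray_to E a \<omega> (i + (k0 - 1 - i)) = ray_to E b \<omega> (j + (k0 - 1 - i))"
        using ray_to_meet_add[OF \<omega>, of a i b j "k0 - 1 - i"] ij by simp
      moreover have "i + (k0 - 1 - i) = k0 - 1" "j + (k0 - 1 - i) = m0 - 1" using lt m0 by arith+
      ultimately show False using first lt m0 by auto
    qed
    then have "v = ray_to E a \<omega> (k0 + (i - k0))" using ij by simp
    then show "v \<in> rayset E (ray_to E a \<omega> k0) \<omega>" unfolding rayset_ray_to[OF \<omega>] by auto
  qed
qed

lemma horo_eq:
  assumes \<omega>: "\<omega> \<in> boundary E" and "ray_to E a \<omega> k = ray_to E b \<omega> m"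
  shows "horo E a b \<omega> = int k - int m"
proof -
  obtain k0 m0 where km: "ray_to E a \<omega> k0 = ray_to E b \<omega> m0" "int k0 - int m0 = int k - int m"
    "k0 = 0 \<or> m0 = 0 \<or> ray_to E a \<omega> (k0 - 1) \<noteq> ray_to E b \<omega> (m0 - 1)"
    using ray_to_first_meet[OF assms] by blast
  define y where "y = ray_to E a \<omega> k0"
  have "rayset E a \<omega> \<inter> rayset E b \<omega> = rayset E y \<omega>"
    unfolding y_def using rayset_inter_first_meet[OF \<omega> km(1,3)] .
  then have "(THE y'. rayset E a \<omega> \<inter> rayset E b \<omega> = rayset E y' \<omega>) = y"
    using rayset_inj[OF \<omega>] by (intro the_equality) auto
  moreover have "tdist E a y = k0" unfolding y_def using tdist_ray_to[OF \<omega>] .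
  moreover have "tdist E b y = m0" unfolding y_def km(1) using tdist_ray_to[OF \<omega>] .
  ultimately show ?thesis unfolding horo_def Let_def using km(2) by simp
qed

lemma horo_cocycle:
  assumes "\<omega> \<in> boundary E"
  shows "horo E a c \<omega> = horo E a b \<omega> + horo E b c \<omega>"
proof -
  obtain k1 m1 where 1: "ray_to E a \<omega> k1 = ray_to E b \<omega> m1" using ray_to_meet[OF assms] by blast
  obtain k2 m2 where 2: "ray_to E b \<omega> k2 = ray_to E c \<omega> m2" using ray_to_meet[OF assms] by blast
  have "ray_to E a \<omega> (k1 + k2) = ray_to E c \<omega> (m2 + m1)"
    using ray_to_meet_add[OF assms 1, of k2] ray_to_meet_add[OF assms 2, of m1] by (simp add: ac_simps)
  then show ?thesis using horo_eq[OF assms 1] horo_eq[OF assms 2] horo_eq[OF assms] by simp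
qed

lemma horo_ray_to:
  assumes "\<omega> \<in> boundary E"
  shows "horo E o' x \<omega> = horo E o' (ray_to E x \<omega> n) \<omega> - int n"
  using horo_eq[OF assms, of "ray_to E x \<omega> n" 0 x n] horo_cocycle[OF assms, of o' x "ray_to E x \<omega> n"]
    assms by simp

section \<open>Locally constant functions on the boundary\<close>

lemma ray_to_prefix_determined:
  assumes \<omega>: "\<omega> \<in> boundary E"
  obtains K where "\<And>\<eta> j. \<eta> \<in> boundary E \<Longrightarrow> ray_to E o' \<eta> K = ray_to E o' \<omega> K \<Longrightarrow> j \<le> k \<Longrightarrow>
    ray_to E x \<eta> j = ray_to E x \<omega> j"
proof -
  obtain k1 m1 where 1: "ray_to E o' \<omega> k1 = ray_to E x \<omega> m1" using ray_to_meet[OF \<omega>] by blast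
  define v where "v = ray_to E o' \<omega> (k1 + k)"
  let ?p = "ray_to E x \<omega>"
  have v: "?p (m1 + k) = v" using ray_to_meet_add[OF \<omega> 1] v_def by simp
  have "ray_to E x \<eta> j = ray_to E x \<omega> j"
    if \<eta>: "\<eta> \<in> boundary E" and eqK: "ray_to E o' \<eta> (k1 + k + 1) = ray_to E o' \<omega> (k1 + k + 1)"
      and j: "j \<le> k" for \<eta> j
  proof -
    have "ray_to E o' \<eta> (k1 + k) = v" using ray_to_prefix[OF \<eta> \<omega> eqK] v_def by simp
    then have "ray_to E v \<eta> 1 = ?p (m1 + k + 1)"
      using eqK ray_to_add[OF \<eta>, of o' "k1 + k" 1] ray_to_add[OF \<omega>, of o' "k1 + k" 1]
        ray_to_add[OF \<omega>, of x "m1 + k" 1] v v_def by simp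
    moreover have "?p (m1 + k - 1 + 2) \<noteq> ?p (m1 + k - 1)" using ray_to_no_backtrack[OF \<omega>] .
    moreover have "0 < m1 + k \<Longrightarrow> m1 + k - 1 + 2 = m1 + k + 1" by arith
    ultimately have "0 < m1 + k \<Longrightarrow> ?p (m1 + k - 1) \<noteq> ray_to E v \<eta> 1" by auto
    from ray_to_append[OF \<eta> is_ray_walk[OF is_ray_ray_to[OF \<omega>]]
        is_ray_nonbacktracking[OF is_ray_ray_to[OF \<omega>]] v this, of j]
    show ?thesis using j \<omega> by simp
  qed
  then show ?thesis using that by blast
qed

definition loc_const_at :: "'v \<Rightarrow> ('v bdry \<Rightarrow> 'b) \<Rightarrow> bool" where
  "loc_const_at o' f \<longleftrightarrow>
    (\<forall>\<omega>\<in>boundary E. \<exists>K. \<forall>\<eta>\<in>boundary E. ray_to E o' \<eta> K = ray_to E o' \<omega> K \<longrightarrow> f \<eta> = f \<omega>)"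

lemma loc_const_iff_loc_const_at: "loc_const E f \<longleftrightarrow> loc_const_at o' f"
proof
  assume lc: "loc_const E f"
  show "loc_const_at o' f" unfolding loc_const_at_def
  proof
    fix \<omega> assume \<omega>: "\<omega> \<in> boundary E"
    obtain x y where c: "\<omega> \<in> cone E x y" "\<forall>\<eta>\<in>cone E x y. f \<eta> = f \<omega>"
      using lc \<omega> unfolding loc_const_def by blast
    obtain i where i: "y = ray_to E x \<omega> i" using c(1) unfolding cone_def rayset_def by auto
    obtain K where K: "\<And>\<eta> j. \<eta> \<in> boundary E \<Longrightarrow> ray_to E o' \<eta> K = ray_to E o' \<omega> K \<Longrightarrow>
        j \<le> i \<Longrightarrow> ray_to E x \<eta> j = ray_to E x \<omega> j"
      using ray_to_prefix_determined[OF \<omega>, of o' i x] by blast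
    have "f \<eta> = f \<omega>" if "\<eta> \<in> boundary E" "ray_to E o' \<eta> K = ray_to E o' \<omega> K" for \<eta>
    proof -
      have "y \<in> rayset E x \<eta>" using K[OF that order_refl] i unfolding rayset_def by (metis rangeI)
      then show ?thesis using c that(1) unfolding cone_def by blast
    qed
    then show "\<exists>K. \<forall>\<eta>\<in>boundary E. ray_to E o' \<eta> K = ray_to E o' \<omega> K \<longrightarrow> f \<eta> = f \<omega>" by blast
  qed
next
  assume lc: "loc_const_at o' f"
  show "loc_const E f" unfolding loc_const_def
  proof
    fix \<omega> assume \<omega>: "\<omega> \<in> boundary E"
    obtain K where K: "\<forall>\<eta>\<in>boundary E. ray_to E o' \<eta> K = ray_to E o' \<omega> K \<longrightarrow> f \<eta> = f \<omega>"
      using lc \<omega> unfolding loc_const_at_def by blast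
    have "\<omega> \<in> cone E o' (ray_to E o' \<omega> K)" using \<omega> unfolding cone_def rayset_def by simp
    moreover have "f \<eta> = f \<omega>" if cone: "\<eta> \<in> cone E o' (ray_to E o' \<omega> K)" for \<eta>
    proof -
      obtain i where \<eta>: "\<eta> \<in> boundary E" and i: "ray_to E o' \<omega> K = ray_to E o' \<eta> i"
        using cone unfolding cone_def rayset_def by blast
      then have "i = K" using tdist_ray_to[OF \<eta>, of o' i] tdist_ray_to[OF \<omega>, of o' K] by simp
      then show "f \<eta> = f \<omega>" using K \<eta> i by auto
    qed
    ultimately show "\<exists>x y. \<omega> \<in> cone E x y \<and> (\<forall>\<eta>\<in>cone E x y. f \<eta> = f \<omega>)" by blast
  qed
qed

lemma loc_const_at_comp: "loc_const_at o' f \<Longrightarrow> loc_const_at o' (\<lambda>\<omega>. h (f \<omega>))"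
proof (unfold loc_const_at_def, intro ballI)
  fix \<omega> assume "\<forall>\<omega>\<in>boundary E. \<exists>K. \<forall>\<eta>\<in>boundary E. ray_to E o' \<eta> K = ray_to E o' \<omega> K \<longrightarrow> f \<eta> = f \<omega>"
    and "\<omega> \<in> boundary E"
  then obtain K where "\<forall>\<eta>\<in>boundary E. ray_to E o' \<eta> K = ray_to E o' \<omega> K \<longrightarrow> f \<eta> = f \<omega>" by blast
  then show "\<exists>K. \<forall>\<eta>\<in>boundary E. ray_to E o' \<eta> K = ray_to E o' \<omega> K \<longrightarrow> h (f \<eta>) = h (f \<omega>)"
    by (intro exI[of _ K]) auto
qed

lemma loc_const_at_compose:
  assumes "loc_const_at o' f" "\<And>y. loc_const_at o' (g y)"
  shows "loc_const_at o' (\<lambda>\<omega>. g (f \<omega>) \<omega>)"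
  unfolding loc_const_at_def
proof
  fix \<omega> assume \<omega>: "\<omega> \<in> boundary E"
  obtain K1 where K1: "\<forall>\<eta>\<in>boundary E. ray_to E o' \<eta> K1 = ray_to E o' \<omega> K1 \<longrightarrow> f \<eta> = f \<omega>"
    using assms(1) \<omega> unfolding loc_const_at_def by blast
  obtain K2 where K2: "\<forall>\<eta>\<in>boundary E. ray_to E o' \<eta> K2 = ray_to E o' \<omega> K2 \<longrightarrow> g (f \<omega>) \<eta> = g (f \<omega>) \<omega>"
    using assms(2) \<omega> unfolding loc_const_at_def by blast
  have "g (f \<eta>) \<eta> = g (f \<omega>) \<omega>"
    if \<eta>: "\<eta> \<in> boundary E" and eq: "ray_to E o' \<eta> (max K1 K2) = ray_to E o' \<omega> (max K1 K2)" for \<eta>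
    using ray_to_prefix[OF \<eta> \<omega> eq, of K1] ray_to_prefix[OF \<eta> \<omega> eq, of K2] K1 K2 \<eta> by auto
  then show "\<exists>K. \<forall>\<eta>\<in>boundary E. ray_to E o' \<eta> K = ray_to E o' \<omega> K \<longrightarrow> g (f \<eta>) \<eta> = g (f \<omega>) \<omega>"
    by blast
qed

lemma loc_const_at_ray_to: "loc_const_at o' (\<lambda>\<omega>. ray_to E x \<omega> k)"
  unfolding loc_const_at_def
proof
  fix \<omega> assume \<omega>: "\<omega> \<in> boundary E"
  obtain K where "\<And>\<eta> j. \<eta> \<in> boundary E \<Longrightarrow> ray_to E o' \<eta> K = ray_to E o' \<omega> K \<Longrightarrow> j \<le> k \<Longrightarrow>
      ray_to E x \<eta> j = ray_to E x \<omega> j"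
    using ray_to_prefix_determined[OF \<omega>] by blast
  then show "\<exists>K. \<forall>\<eta>\<in>boundary E. ray_to E o' \<eta> K = ray_to E o' \<omega> K \<longrightarrow> ray_to E x \<eta> k = ray_to E x \<omega> k"
    by blast
qed

lemma loc_const_at_horo: "loc_const_at o' (\<lambda>\<omega>. horo E a b \<omega>)"
  unfolding loc_const_at_def
proof
  fix \<omega> assume \<omega>: "\<omega> \<in> boundary E"
  obtain k m where km: "ray_to E a \<omega> k = ray_to E b \<omega> m" using ray_to_meet[OF \<omega>] by blast
  obtain K where K: "\<And>\<eta> j. \<eta> \<in> boundary E \<Longrightarrow> ray_to E o' \<eta> K = ray_to E o' \<omega> K \<Longrightarrow>
      j \<le> m \<Longrightarrow> ray_to E b \<eta> j = ray_to E b \<omega> j"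
    using ray_to_prefix_determined[OF \<omega>, of o' m b] by blast
  obtain K' where K': "\<And>\<eta> j. \<eta> \<in> boundary E \<Longrightarrow> ray_to E o' \<eta> K' = ray_to E o' \<omega> K' \<Longrightarrow>
      j \<le> k \<Longrightarrow> ray_to E a \<eta> j = ray_to E a \<omega> j"
    using ray_to_prefix_determined[OF \<omega>, of o' k a] by blast
  have "horo E a b \<eta> = horo E a b \<omega>"
    if \<eta>: "\<eta> \<in> boundary E" and eq: "ray_to E o' \<eta> (max K K') = ray_to E o' \<omega> (max K K')" for \<eta>
  proof -
    have "ray_to E a \<eta> k = ray_to E b \<eta> m"
      using K[OF \<eta> _ order_refl] K'[OF \<eta> _ order_refl] ray_to_prefix[OF \<eta> \<omega> eq] km by simp
    then show ?thesis using horo_eq[OF \<eta>] horo_eq[OF \<omega> km] by simp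
  qed
  then show "\<exists>K. \<forall>\<eta>\<in>boundary E. ray_to E o' \<eta> K = ray_to E o' \<omega> K \<longrightarrow> horo E a b \<eta> = horo E a b \<omega>"
    by blast
qed

lemma loc_const_comb:
  assumes "loc_const E f" "loc_const E g"
  shows "loc_const E (\<lambda>\<omega>. h (f \<omega>) (g \<omega>))"
proof -
  fix o' :: 'v
  have "loc_const_at o' f" "loc_const_at o' g"
    using assms loc_const_iff_loc_const_at by blast+
  then have "loc_const_at o' (\<lambda>\<omega>. h (f \<omega>) (g \<omega>))"
    using loc_const_at_compose[of o' f "\<lambda>y \<omega>. h y (g \<omega>)"] loc_const_at_comp[of o' g] by blast
  then show ?thesis using loc_const_iff_loc_const_at by blast
qed

lemma loc_const_const: "loc_const E (\<lambda>\<omega>. c)"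
  unfolding loc_const_iff_loc_const_at[of _ o'] loc_const_at_def by blast

lemma loc_const_comp: "loc_const E f \<Longrightarrow> loc_const E (\<lambda>\<omega>. h (f \<omega>))"
  using loc_const_comb[OF _ loc_const_const, of f "\<lambda>a b. h a"] by simp

lemma loc_const_mult: "loc_const E f \<Longrightarrow> loc_const E g \<Longrightarrow> loc_const E (\<lambda>\<omega>. f \<omega> * g \<omega>)"
  by (rule loc_const_comb)

lemma loc_const_divide: "loc_const E f \<Longrightarrow> loc_const E g \<Longrightarrow> loc_const E (\<lambda>\<omega>. f \<omega> / g \<omega>)"
  by (rule loc_const_comb)

lemma loc_const_sum:
  "finite S \<Longrightarrow> (\<And>i. i \<in> S \<Longrightarrow> loc_const E (f i)) \<Longrightarrow> loc_const E (\<lambda>\<omega>. \<Sum>i\<in>S. f i \<omega>)"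
proof (induction S rule: finite_induct)
  case empty then show ?case using loc_const_const by simp
next
  case (insert x F)
  then show ?case using loc_const_comb[of "f x" "\<lambda>\<omega>. \<Sum>i\<in>F. f i \<omega>" "(+)"] by simp
qed

lemma loc_const_sum_list:
  "(\<And>i. i \<in> set L \<Longrightarrow> loc_const E (f i)) \<Longrightarrow> loc_const E (\<lambda>\<omega>. \<Sum>i\<leftarrow>L. f i \<omega>)"
proof (induction L)
  case Nil then show ?case using loc_const_const by simp
next
  case (Cons x L)
  then show ?case using loc_const_comb[of "f x" "\<lambda>\<omega>. \<Sum>i\<leftarrow>L. f i \<omega>" "(+)"] by simp
qed

lemma loc_const_cong:
  assumes "loc_const E f" "\<And>\<omega>. \<omega> \<in> boundary E \<Longrightarrow> f \<omega> = g \<omega>"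
  shows "loc_const E g"
  unfolding loc_const_def
proof
  fix \<omega> assume \<omega>: "\<omega> \<in> boundary E"
  obtain x y where c: "\<omega> \<in> cone E x y" "\<forall>\<eta>\<in>cone E x y. f \<eta> = f \<omega>"
    using assms(1) \<omega> unfolding loc_const_def by blast
  have "g \<eta> = g \<omega>" if \<eta>: "\<eta> \<in> cone E x y" for \<eta>
  proof -
    have "g \<eta> = f \<eta>" "g \<omega> = f \<omega>" using \<eta> \<omega> assms(2) unfolding cone_def by auto
    then show ?thesis using c(2) \<eta> by simp
  qed
  then have "\<forall>\<eta>\<in>cone E x y. g \<eta> = g \<omega>" by blast
  then show "\<exists>x y. \<omega> \<in> cone E x y \<and> (\<forall>\<eta>\<in>cone E x y. g \<eta> = g \<omega>)" using c(1) by blast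
qed

lemma loc_const_ray_to_comp:
  assumes "\<And>y. loc_const E (f y)"
  shows "loc_const E (\<lambda>\<omega>. f (ray_to E x \<omega> k) \<omega>)"
proof -
  have "loc_const_at x (f y)" for y using assms loc_const_iff_loc_const_at by blast
  then have "loc_const_at x (\<lambda>\<omega>. f (ray_to E x \<omega> k) \<omega>)"
    by (rule loc_const_at_compose[OF loc_const_at_ray_to])
  then show ?thesis using loc_const_iff_loc_const_at by blast
qed

lemma loc_const_horo: "loc_const E (\<lambda>\<omega>. h (horo E a b \<omega>))"
  using loc_const_at_comp[OF loc_const_at_horo[of a a b], where h = h] loc_const_iff_loc_const_at
  by blast

lemma loc_const_poisson: "loc_const E (\<lambda>\<omega>. poisson q E o' s x \<omega>)"
  unfolding poisson_def by (rule loc_const_horo)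

end

definition graph_aut :: "('v \<Rightarrow> 'v \<Rightarrow> bool) \<Rightarrow> ('v \<Rightarrow> 'v) \<Rightarrow> bool" where
  "graph_aut E g \<longleftrightarrow> bij g \<and> (\<forall>x y. E (g x) (g y) \<longleftrightarrow> E x y)"

lemma graph_aut_inj: "graph_aut E g \<Longrightarrow> inj g"
  unfolding graph_aut_def bij_def by blast

lemma graph_aut_inv_apply [simp]: "graph_aut E g \<Longrightarrow> inv g (g x) = x"
  by (metis graph_aut_inj inv_f_f)

lemma graph_aut_apply_inv [simp]: "graph_aut E g \<Longrightarrow> g (inv g x) = x"
  unfolding graph_aut_def by (meson bij_inv_eq_iff)

lemma graph_aut_inv: "graph_aut E g \<Longrightarrow> graph_aut E (inv g)"
  unfolding graph_aut_def
proof (intro conjI allI)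
  assume g: "bij g \<and> (\<forall>x y. E (g x) (g y) = E x y)"
  then show "bij (inv g)" using bij_imp_bij_inv by blast
  fix x y
  have "E (inv g x) (inv g y) = E (g (inv g x)) (g (inv g y))" using g by blast
  also have "\<dots> = E x y" using g surj_f_inv_f[OF bij_is_surj] by metis
  finally show "E (inv g x) (inv g y) = E x y" .
qed

lemma graph_aut_is_ray: "graph_aut E g \<Longrightarrow> is_ray E r \<Longrightarrow> is_ray E (g \<circ> r)"
  unfolding is_ray_def graph_aut_def by (auto simp: bij_def inj_eq)

lemma ray_equiv_comp: "ray_equiv r r' \<Longrightarrow> ray_equiv (g \<circ> r) (g \<circ> r')"
  unfolding ray_equiv_def comp_def by metis

lemma bact_comp: "bact h (bact g \<omega>) = bact (h \<circ> g) \<omega>"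
  unfolding bact_def by (auto simp: image_image comp_assoc)

lemma bact_inv_bact [simp]: "graph_aut E g \<Longrightarrow> bact (inv g) (bact g \<omega>) = \<omega>"
  unfolding bact_comp unfolding bact_def by (simp add: graph_aut_inj)

lemma bact_boundary:
  assumes g: "graph_aut E g" and \<omega>: "\<omega> \<in> boundary E"
  shows "bact g \<omega> \<in> boundary E"
proof -
  obtain r0 where r0: "is_ray E r0" "\<omega> = {r'. is_ray E r' \<and> ray_equiv r0 r'}"
    using \<omega> unfolding boundary_def by blast
  have "r \<in> (\<circ>) g ` \<omega>" if r: "is_ray E r" "ray_equiv (g \<circ> r0) r" for r
  proof -
    have "inv g \<circ> r \<in> \<omega>"
      using r0 graph_aut_is_ray[OF graph_aut_inv[OF g] r(1)] ray_equiv_comp[OF r(2), of "inv g"] g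
      by (simp add: comp_assoc[symmetric] o_def)
    moreover have "r = g \<circ> (inv g \<circ> r)" using g by (simp add: o_def)
    ultimately show ?thesis by blast
  qed
  then have "bact g \<omega> = {r. is_ray E r \<and> ray_equiv (g \<circ> r0) r}"
    unfolding bact_def using r0 graph_aut_is_ray[OF g] ray_equiv_comp by auto
  then show ?thesis unfolding boundary_def using graph_aut_is_ray[OF g r0(1)] by blast
qed

context locally_finite_tree
begin

lemma ray_to_bact:
  assumes "graph_aut E g" "\<omega> \<in> boundary E"
  shows "ray_to E (g x) (bact g \<omega>) = g \<circ> ray_to E x \<omega>"
  using ray_to_eqI[OF bact_boundary[OF assms], of "g \<circ> ray_to E x \<omega>" "g x"] ray_to_mem[OF assms(2)]
    assms(2) unfolding bact_def by simp

lemma ray_to_bact_eq_iff: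
  assumes "graph_aut E g" "\<omega> \<in> boundary E" "\<omega>' \<in> boundary E"
  shows "ray_to E (g x) (bact g \<omega>) k = ray_to E (g x) (bact g \<omega>') k \<longleftrightarrow> ray_to E x \<omega> k = ray_to E x \<omega>' k"
  using ray_to_bact[OF assms(1,2)] ray_to_bact[OF assms(1,3)] graph_aut_inj[OF assms(1)]
  by (simp add: inj_eq)

lemma horo_bact:
  assumes "graph_aut E g" "\<omega> \<in> boundary E"
  shows "horo E (g a) (g b) (bact g \<omega>) = horo E a b \<omega>"
proof -
  obtain k m where km: "ray_to E a \<omega> k = ray_to E b \<omega> m" using ray_to_meet[OF assms(2)] by blast
  then have "ray_to E (g a) (bact g \<omega>) k = ray_to E (g b) (bact g \<omega>) m"
    using ray_to_bact[OF assms] by simp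
  then show ?thesis using horo_eq[OF bact_boundary[OF assms]] horo_eq[OF assms(2) km] by simp
qed

lemma poisson_bact:
  assumes "graph_aut E g" "\<omega> \<in> boundary E"
  shows "poisson q E o' s (g x) (bact g \<omega>) = poisson q E o' s x \<omega> * poisson q E o' s (g o') (bact g \<omega>)"
proof -
  have "horo E o' (g x) (bact g \<omega>) = horo E o' (g o') (bact g \<omega>) + horo E o' x \<omega>"
    using horo_cocycle[OF bact_boundary[OF assms], of o' "g x" "g o'"] horo_bact[OF assms, of o' x]
    by simp
  then show ?thesis unfolding poisson_def by (simp add: algebra_simps flip: exp_add)
qed

lemma loc_const_bact:
  assumes g: "graph_aut E g" and f: "loc_const E f"
  shows "loc_const E (\<lambda>\<omega>. f (bact g \<omega>))"
proof -
  fix o' :: 'v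
  have f': "loc_const_at (g o') f" using f loc_const_iff_loc_const_at by blast
  have "loc_const_at o' (\<lambda>\<omega>. f (bact g \<omega>))"
    unfolding loc_const_at_def
  proof
    fix \<omega> assume \<omega>: "\<omega> \<in> boundary E"
    obtain K where K: "\<forall>\<eta>\<in>boundary E.
        ray_to E (g o') \<eta> K = ray_to E (g o') (bact g \<omega>) K \<longrightarrow> f \<eta> = f (bact g \<omega>)"
      using f' bact_boundary[OF g \<omega>] unfolding loc_const_at_def by blast
    have "f (bact g \<eta>) = f (bact g \<omega>)"
      if \<eta>: "\<eta> \<in> boundary E" "ray_to E o' \<eta> K = ray_to E o' \<omega> K" for \<eta>
      using K bact_boundary[OF g \<eta>(1)] ray_to_bact[OF g \<eta>(1)] ray_to_bact[OF g \<omega>] \<eta>(2) by simp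
    then show "\<exists>K. \<forall>\<eta>\<in>boundary E. ray_to E o' \<eta> K = ray_to E o' \<omega> K \<longrightarrow> f (bact g \<eta>) = f (bact g \<omega>)"
      by blast
  qed
  then show ?thesis using loc_const_iff_loc_const_at by blast
qed

end

lemma poisson_nonzero: "poisson q E o' s x \<omega> \<noteq> 0"
  unfolding poisson_def by simp

lemma cnj_poisson: "cnj (poisson q E o' (- cnj s) x \<omega>) = poisson q E o' s x \<omega>"
  unfolding poisson_def exp_cnj by simp

section \<open>Distributions and separable kernels\<close>

text \<open>A distribution is only known to be linear on locally constant functions, so
  \<open>tensor_int\<close> is only under control on kernels that are finite sums of products of
  locally constant functions.\<close>

definition separable_by ::
  "('v \<Rightarrow> 'v \<Rightarrow> bool) \<Rightarrow> ('v bdry \<Rightarrow> 'v bdry \<Rightarrow> complex)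
    \<Rightarrow> (('v bdry \<Rightarrow> complex) \<times> ('v bdry \<Rightarrow> complex)) list \<Rightarrow> bool" where
  "separable_by E F L \<longleftrightarrow> (\<forall>p\<in>set L. loc_const E (fst p) \<and> loc_const E (snd p)) \<and>
     (\<forall>\<omega>\<in>boundary E. \<forall>\<omega>'\<in>boundary E. F \<omega> \<omega>' = (\<Sum>p\<leftarrow>L. fst p \<omega> * snd p \<omega>'))"

definition separable :: "('v \<Rightarrow> 'v \<Rightarrow> bool) \<Rightarrow> ('v bdry \<Rightarrow> 'v bdry \<Rightarrow> complex) \<Rightarrow> bool" where
  "separable E F \<longleftrightarrow> (\<exists>L. separable_by E F L)"

lemma sum_list_mult_sum_list:
  "(\<Sum>p\<leftarrow>L1. f p) * (\<Sum>r\<leftarrow>L2. g r) =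
   (\<Sum>x\<leftarrow>List.product L1 L2. f (fst x) * g (snd x) :: 'a :: comm_semiring_1)"
  by (induction L1) (simp_all add: algebra_simps sum_list_const_mult o_def)

lemma boundary_value_distribution: "boundary_value q E o' s \<phi> \<mu> \<Longrightarrow> distribution E \<mu>"
  unfolding boundary_value_def by blast

context locally_finite_tree
begin

lemma distribution_cong:
  assumes "distribution E \<mu>" "loc_const E f" "\<And>\<omega>. \<omega> \<in> boundary E \<Longrightarrow> f \<omega> = g \<omega>"
  shows "\<mu> g = \<mu> f"
proof -
  have "\<forall>f g. loc_const E f \<and> (\<forall>\<omega>\<in>boundary E. f \<omega> = g \<omega>) \<longrightarrow> \<mu> f = \<mu> g"
    using assms(1) unfolding distribution_def by (elim conjE)
  from this[rule_format, of f g] show ?thesis using assms(2,3) by simp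
qed

lemma distribution_add:
  assumes "distribution E \<mu>" "loc_const E f" "loc_const E g"
  shows "\<mu> (\<lambda>\<omega>. f \<omega> + g \<omega>) = \<mu> f + \<mu> g"
proof -
  have "\<forall>f g. loc_const E f \<and> loc_const E g \<longrightarrow> \<mu> (\<lambda>\<omega>. f \<omega> + g \<omega>) = \<mu> f + \<mu> g"
    using assms(1) unfolding distribution_def by (elim conjE)
  from this[rule_format, of f g] show ?thesis using assms(2,3) by simp
qed

lemma distribution_scale:
  assumes "distribution E \<mu>" "loc_const E f"
  shows "\<mu> (\<lambda>\<omega>. c * f \<omega>) = c * \<mu> f"
proof -
  have "\<forall>c f. loc_const E f \<longrightarrow> \<mu> (\<lambda>\<omega>. c * f \<omega>) = c * \<mu> f"
    using assms(1) unfolding distribution_def by (elim conjE)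
  from this[rule_format, of f c] show ?thesis using assms(2) by simp
qed

lemma distribution_zero: "distribution E \<mu> \<Longrightarrow> \<mu> (\<lambda>\<omega>. 0) = 0"
  using distribution_scale[OF _ loc_const_const, of \<mu> 0 0] by simp

lemma loc_const_scale: "loc_const E f \<Longrightarrow> loc_const E (\<lambda>\<omega>. c * f \<omega>)"
  by (rule loc_const_comp)

lemma distribution_sum_list:
  assumes "distribution E \<mu>" "\<And>p. p \<in> set L \<Longrightarrow> loc_const E (f p)"
  shows "\<mu> (\<lambda>\<omega>. \<Sum>p\<leftarrow>L. c p * f p \<omega>) = (\<Sum>p\<leftarrow>L. c p * \<mu> (f p))"
  using assms(2)
proof (induction L)
  case Nil
  then show ?case using distribution_zero[OF assms(1)] by simp
next
  case (Cons a L)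
  have "loc_const E (\<lambda>\<omega>. c a * f a \<omega>)" "loc_const E (\<lambda>\<omega>. \<Sum>p\<leftarrow>L. c p * f p \<omega>)"
    using Cons.prems by (auto intro!: loc_const_scale loc_const_sum_list)
  then show ?case
    using distribution_add[OF assms(1)] distribution_scale[OF assms(1)] Cons by simp
qed

lemma distribution_cdist:
  assumes d: "distribution E \<mu>"
  shows "distribution E (cdist \<mu>)"
  unfolding distribution_def
proof (intro conjI allI impI)
  fix f g :: "'v bdry \<Rightarrow> complex" assume "loc_const E f \<and> (\<forall>\<omega>\<in>boundary E. f \<omega> = g \<omega>)"
  then show "cdist \<mu> f = cdist \<mu> g"
    using distribution_cong[OF d loc_const_comp[of f cnj]] unfolding cdist_def by metis
next
  fix f g :: "'v bdry \<Rightarrow> complex" assume "loc_const E f \<and> loc_const E g"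
  then show "cdist \<mu> (\<lambda>\<omega>. f \<omega> + g \<omega>) = cdist \<mu> f + cdist \<mu> g"
    using distribution_add[OF d loc_const_comp[of f cnj] loc_const_comp[of g cnj]]
    unfolding cdist_def by simp
next
  fix c and f :: "'v bdry \<Rightarrow> complex" assume "loc_const E f"
  then show "cdist \<mu> (\<lambda>\<omega>. c * f \<omega>) = c * cdist \<mu> f"
    using distribution_scale[OF d loc_const_comp[of f cnj], of "cnj c"] unfolding cdist_def by simp
qed

lemma separable_by_loc_const:
  "separable_by E F L \<Longrightarrow> p \<in> set L \<Longrightarrow> loc_const E (fst p) \<and> loc_const E (snd p)"
  unfolding separable_by_def by blast

lemma tensor_int_separable_by:
  assumes \<mu>: "distribution E \<mu>" and \<nu>: "distribution E \<nu>" and F: "separable_by E F L"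
  shows "tensor_int \<mu> \<nu> F = (\<Sum>p\<leftarrow>L. \<mu> (fst p) * \<nu> (snd p))"
proof -
  note lc = separable_by_loc_const[OF F]
  have "\<nu> (\<lambda>\<omega>'. F \<omega> \<omega>') = (\<Sum>p\<leftarrow>L. \<nu> (snd p) * fst p \<omega>)" if \<omega>: "\<omega> \<in> boundary E" for \<omega>
  proof -
    have "\<nu> (\<lambda>\<omega>'. F \<omega> \<omega>') = \<nu> (\<lambda>\<omega>'. \<Sum>p\<leftarrow>L. fst p \<omega> * snd p \<omega>')"
      using F \<omega> by (intro distribution_cong[OF \<nu>] loc_const_sum_list loc_const_scale)
        (auto simp: separable_by_def lc)
    also have "\<dots> = (\<Sum>p\<leftarrow>L. fst p \<omega> * \<nu> (snd p))"
      using lc by (intro distribution_sum_list[OF \<nu>]) auto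
    finally show ?thesis by (simp add: mult.commute)
  qed
  then have "tensor_int \<mu> \<nu> F = \<mu> (\<lambda>\<omega>. \<Sum>p\<leftarrow>L. \<nu> (snd p) * fst p \<omega>)"
    unfolding tensor_int_def using lc
    by (intro distribution_cong[OF \<mu>] loc_const_sum_list loc_const_scale) auto
  also have "\<dots> = (\<Sum>p\<leftarrow>L. \<nu> (snd p) * \<mu> (fst p))"
    using lc by (intro distribution_sum_list[OF \<mu>]) auto
  finally show ?thesis by (simp add: mult.commute)
qed

lemma separable_product: "loc_const E A \<Longrightarrow> loc_const E B \<Longrightarrow> separable E (\<lambda>\<omega> \<omega>'. A \<omega> * B \<omega>')"
  unfolding separable_def separable_by_def by (intro exI[of _ "[(A, B)]"]) auto

lemma separable_cong:
  assumes "separable E F" "\<And>\<omega> \<omega>'. \<omega> \<in> boundary E \<Longrightarrow> \<omega>' \<in> boundary E \<Longrightarrow> F \<omega> \<omega>' = G \<omega> \<omega>'"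
  shows "separable E G"
proof -
  obtain L where "separable_by E F L" using assms(1) unfolding separable_def by blast
  then have "separable_by E G L" using assms(2) unfolding separable_by_def by simp
  then show ?thesis unfolding separable_def by blast
qed

lemma separable_left: "loc_const E A \<Longrightarrow> separable E (\<lambda>\<omega> \<omega>'. A \<omega>)"
  using separable_product[OF _ loc_const_const, of A 1] by simp

lemma separable_right: "loc_const E B \<Longrightarrow> separable E (\<lambda>\<omega> \<omega>'. B \<omega>')"
  using separable_product[OF loc_const_const, of B 1] by simp

lemma separable_by_append:
  "separable_by E F L1 \<Longrightarrow> separable_by E G L2 \<Longrightarrow>
   separable_by E (\<lambda>\<omega> \<omega>'. F \<omega> \<omega>' + G \<omega> \<omega>') (L1 @ L2)"
  unfolding separable_by_def by auto

lemma separable_add: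
  "separable E F \<Longrightarrow> separable E G \<Longrightarrow> separable E (\<lambda>\<omega> \<omega>'. F \<omega> \<omega>' + G \<omega> \<omega>')"
  unfolding separable_def using separable_by_append by blast

lemma separable_zero: "separable E (\<lambda>\<omega> \<omega>'. 0)"
  unfolding separable_def separable_by_def by (intro exI[of _ "[]"]) auto

lemma separable_sum:
  "finite S \<Longrightarrow> (\<And>i. i \<in> S \<Longrightarrow> separable E (F i)) \<Longrightarrow> separable E (\<lambda>\<omega> \<omega>'. \<Sum>i\<in>S. F i \<omega> \<omega>')"
  by (induction S rule: finite_induct) (auto intro: separable_zero separable_add)

lemma separable_mult:
  assumes "separable E F" "separable E G"
  shows "separable E (\<lambda>\<omega> \<omega>'. F \<omega> \<omega>' * G \<omega> \<omega>')"
proof -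
  obtain L1 L2 where L1: "separable_by E F L1" and L2: "separable_by E G L2"
    using assms unfolding separable_def by blast
  let ?L = "map (\<lambda>x. (\<lambda>\<omega>. fst (fst x) \<omega> * fst (snd x) \<omega>, \<lambda>\<omega>'. snd (fst x) \<omega>' * snd (snd x) \<omega>'))
    (List.product L1 L2)"
  have "separable_by E (\<lambda>\<omega> \<omega>'. F \<omega> \<omega>' * G \<omega> \<omega>') ?L"
    unfolding separable_by_def
  proof (rule conjI; intro ballI)
    fix p' assume "p' \<in> set ?L"
    then show "loc_const E (fst p') \<and> loc_const E (snd p')"
      using separable_by_loc_const[OF L1] separable_by_loc_const[OF L2] by (auto intro!: loc_const_mult)
  next
    fix \<omega> \<omega>' assume "\<omega> \<in> boundary E" "\<omega>' \<in> boundary E"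
    then show "F \<omega> \<omega>' * G \<omega> \<omega>' = (\<Sum>p\<leftarrow>?L. fst p \<omega> * snd p \<omega>')"
      using L1 L2 unfolding separable_by_def
      by (simp add: sum_list_mult_sum_list o_def mult_ac)
  qed
  then show ?thesis unfolding separable_def by blast
qed

lemma separable_mult_left:
  "loc_const E A \<Longrightarrow> separable E F \<Longrightarrow> separable E (\<lambda>\<omega> \<omega>'. A \<omega> * F \<omega> \<omega>')"
  by (rule separable_mult[OF separable_left])

lemma separable_scale: "separable E F \<Longrightarrow> separable E (\<lambda>\<omega> \<omega>'. c * F \<omega> \<omega>')"
  by (rule separable_mult_left[OF loc_const_const])

lemma separable_poisson_weighted:
  assumes "loc_const E A" "separable E B"
  shows "separable E (\<lambda>\<omega> \<omega>'. A \<omega> * B \<omega> \<omega>' * poisson q E o' s x \<omega> * poisson q E o' s' x \<omega>')"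
  using separable_mult[OF separable_mult[OF separable_mult_left[OF assms]
        separable_left[OF loc_const_poisson]] separable_right[OF loc_const_poisson]] .

lemma separable_cutoff_sum:
  assumes "finite S" "\<And>x. loc_const E (\<Xi> x)" "\<And>x. separable E (b x)"
  shows "separable E (\<lambda>\<omega> \<omega>'. \<Sum>x\<in>S. \<Xi> x \<omega> * b x \<omega> \<omega>' * poisson q E o' s x \<omega> * poisson q E o' s' x \<omega>')"
  using assms by (intro separable_sum separable_poisson_weighted)

context
  fixes \<mu> \<nu> :: "('v bdry \<Rightarrow> complex) \<Rightarrow> complex"
  assumes \<mu>: "distribution E \<mu>" and \<nu>: "distribution E \<nu>"
begin

lemma tensor_int_cong:
  assumes "separable E F" "\<And>\<omega> \<omega>'. \<omega> \<in> boundary E \<Longrightarrow> \<omega>' \<in> boundary E \<Longrightarrow> F \<omega> \<omega>' = G \<omega> \<omega>'"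
  shows "tensor_int \<mu> \<nu> F = tensor_int \<mu> \<nu> G"
proof -
  obtain L where L: "separable_by E F L" using assms(1) unfolding separable_def by blast
  then have "separable_by E G L" using assms(2) unfolding separable_by_def by simp
  then show ?thesis using tensor_int_separable_by[OF \<mu> \<nu>] L by simp
qed

lemma tensor_int_add:
  assumes "separable E F" "separable E G"
  shows "tensor_int \<mu> \<nu> (\<lambda>\<omega> \<omega>'. F \<omega> \<omega>' + G \<omega> \<omega>') = tensor_int \<mu> \<nu> F + tensor_int \<mu> \<nu> G"
proof -
  obtain L1 L2 where L1: "separable_by E F L1" and L2: "separable_by E G L2"
    using assms unfolding separable_def by blast
  then show ?thesis using tensor_int_separable_by[OF \<mu> \<nu>] separable_by_append[OF L1 L2] by simp
qed

lemma tensor_int_sum: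
  "finite S \<Longrightarrow> (\<And>i. i \<in> S \<Longrightarrow> separable E (F i)) \<Longrightarrow>
   tensor_int \<mu> \<nu> (\<lambda>\<omega> \<omega>'. \<Sum>i\<in>S. F i \<omega> \<omega>') = (\<Sum>i\<in>S. tensor_int \<mu> \<nu> (F i))"
proof (induction S rule: finite_induct)
  case empty
  then show ?case using tensor_int_separable_by[OF \<mu> \<nu>, of "\<lambda>\<omega> \<omega>'. 0" "[]"]
    unfolding separable_by_def by simp
next
  case (insert x S)
  have "separable E (\<lambda>\<omega> \<omega>'. \<Sum>i\<in>S. F i \<omega> \<omega>')" using insert by (intro separable_sum) auto
  with insert show ?case using tensor_int_add[of "F x"] by simp
qed

lemma tensor_int_scale:
  assumes "separable E F"
  shows "tensor_int \<mu> \<nu> (\<lambda>\<omega> \<omega>'. c * F \<omega> \<omega>') = c * tensor_int \<mu> \<nu> F"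
proof -
  obtain L where L: "separable_by E F L" using assms unfolding separable_def by blast
  then have "separable_by E (\<lambda>\<omega> \<omega>'. c * F \<omega> \<omega>') (map (\<lambda>p. (\<lambda>\<omega>. c * fst p \<omega>, snd p)) L)"
    unfolding separable_by_def
    by (auto simp: sum_list_const_mult o_def mult.assoc intro: loc_const_scale)
  moreover have "\<mu> (\<lambda>\<omega>. c * fst p \<omega>) = c * \<mu> (fst p)" if "p \<in> set L" for p
    using distribution_scale[OF \<mu>] separable_by_loc_const[OF L that] by blast
  ultimately show ?thesis
    using tensor_int_separable_by[OF \<mu> \<nu>] L
    by (simp add: o_def sum_list_const_mult mult.assoc cong: map_cong)
qed

lemma tensor_int_diff:
  assumes "separable E F" "separable E G"
  shows "tensor_int \<mu> \<nu> (\<lambda>\<omega> \<omega>'. F \<omega> \<omega>' - G \<omega> \<omega>') = tensor_int \<mu> \<nu> F - tensor_int \<mu> \<nu> G"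
  using tensor_int_add[OF assms(1) separable_scale[OF assms(2)], of "- 1"]
    tensor_int_scale[OF assms(2), of "- 1"] by simp

end

section \<open>Equivariance of boundary values\<close>

text \<open>The functional \<open>f \<mapsto> \<mu> ((f \<circ> g) / P)\<close> is again a distribution, and its Poisson
  transform is \<open>\<phi> \<circ> g\<inverse> = \<phi>\<close>; uniqueness of the boundary value makes it \<open>\<mu>\<close>.\<close>

lemma boundary_value_bact:
  assumes g: "graph_aut E g" and bv: "boundary_value q E o' s \<phi> \<mu>" and inv: "\<forall>x. \<phi> (g x) = \<phi> x"
    and f: "loc_const E f"
  shows "\<mu> (\<lambda>\<omega>. f (bact g \<omega>) / poisson q E o' s (g o') (bact g \<omega>)) = \<mu> f"
proof -
  let ?P = "\<lambda>\<omega>. poisson q E o' s (g o') (bact g \<omega>)"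
  have \<mu>: "distribution E \<mu>" using boundary_value_distribution[OF bv] .
  define \<nu> where "\<nu> h = \<mu> (\<lambda>\<omega>. h (bact g \<omega>) / ?P \<omega>)" for h
  have lc: "loc_const E (\<lambda>\<omega>. h (bact g \<omega>) / ?P \<omega>)" if "loc_const E h" for h
    by (rule loc_const_divide[OF loc_const_bact[OF g that] loc_const_bact[OF g loc_const_poisson]])
  have "distribution E \<nu>" unfolding distribution_def
  proof (intro conjI allI impI)
    fix h1 h2 :: "'v bdry \<Rightarrow> complex" assume h: "loc_const E h1 \<and> (\<forall>\<omega>\<in>boundary E. h1 \<omega> = h2 \<omega>)"
    show "\<nu> h1 = \<nu> h2" unfolding \<nu>_def
      by (rule distribution_cong[OF \<mu> lc, symmetric]) (use h bact_boundary[OF g] in auto)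
  next
    fix h1 h2 :: "'v bdry \<Rightarrow> complex" assume "loc_const E h1 \<and> loc_const E h2"
    then show "\<nu> (\<lambda>\<omega>. h1 \<omega> + h2 \<omega>) = \<nu> h1 + \<nu> h2"
      unfolding \<nu>_def using distribution_add[OF \<mu> lc lc] by (simp add: add_divide_distrib)
  next
    fix c and h :: "'v bdry \<Rightarrow> complex" assume "loc_const E h"
    then show "\<nu> (\<lambda>\<omega>. c * h \<omega>) = c * \<nu> h"
      unfolding \<nu>_def using distribution_scale[OF \<mu> lc] by (simp add: times_divide_eq_right)
  qed
  moreover have "poisson_transform q E o' s \<nu> x = \<phi> x" for x
  proof -
    let ?y = "inv g x"
    have "poisson_transform q E o' s \<nu> x = \<mu> (\<lambda>\<omega>. poisson q E o' s ?y \<omega>)"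
      unfolding poisson_transform_def \<nu>_def
      using poisson_bact[OF g, of _ q o' s ?y] g
      by (intro distribution_cong[OF \<mu> loc_const_poisson]) (simp add: poisson_nonzero)
    also have "\<dots> = \<phi> x"
      using bv inv[rule_format, of ?y] g unfolding boundary_value_def poisson_transform_def by simp
    finally show ?thesis .
  qed
  ultimately have "\<nu> f = \<mu> f" using bv f unfolding boundary_value_def by blast
  then show ?thesis unfolding \<nu>_def .
qed

lemma separable_by_bact_divide:
  assumes g: "graph_aut E g" and L: "separable_by E H L" and P: "loc_const E P" "loc_const E P'"
  shows "separable_by E (\<lambda>\<omega> \<omega>'. H (bact g \<omega>) (bact g \<omega>') / (P \<omega> * P' \<omega>'))
    (map (\<lambda>p. (\<lambda>\<omega>. fst p (bact g \<omega>) / P \<omega>, \<lambda>\<omega>'. snd p (bact g \<omega>') / P' \<omega>')) L)"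
  unfolding separable_by_def
proof (rule conjI; intro ballI)
  fix p' assume "p' \<in> set (map (\<lambda>p. (\<lambda>\<omega>. fst p (bact g \<omega>) / P \<omega>, \<lambda>\<omega>'. snd p (bact g \<omega>') / P' \<omega>')) L)"
  then show "loc_const E (fst p') \<and> loc_const E (snd p')"
    using separable_by_loc_const[OF L] P by (auto intro!: loc_const_divide loc_const_bact[OF g])
next
  fix \<omega> \<omega>' assume "\<omega> \<in> boundary E" "\<omega>' \<in> boundary E"
  then have "H (bact g \<omega>) (bact g \<omega>') = (\<Sum>p\<leftarrow>L. fst p (bact g \<omega>) * snd p (bact g \<omega>'))"
    using L bact_boundary[OF g] unfolding separable_by_def by blast
  moreover have "(\<Sum>p\<leftarrow>M. f p) / c = (\<Sum>p\<leftarrow>M. f p / c)" for M f and c :: complex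
    by (induction M) (simp_all add: add_divide_distrib)
  ultimately show "H (bact g \<omega>) (bact g \<omega>') / (P \<omega> * P' \<omega>') = (\<Sum>p\<leftarrow>map (\<lambda>p. (\<lambda>\<omega>. fst p (bact g \<omega>) / P \<omega>,
      \<lambda>\<omega>'. snd p (bact g \<omega>') / P' \<omega>')) L. fst p \<omega> * snd p \<omega>')"
    by (simp add: o_def)
qed

lemma cdist_boundary_value_bact:
  assumes g: "graph_aut E g" and bv: "boundary_value q E o' s \<phi> \<mu>" and inv: "\<forall>x. \<phi> (g x) = \<phi> x"
    and f: "loc_const E f"
  shows "cdist \<mu> (\<lambda>\<omega>. f (bact g \<omega>) / poisson q E o' (- cnj s) (g o') (bact g \<omega>)) = cdist \<mu> f"
  using boundary_value_bact[OF g bv inv loc_const_comp[OF f, of cnj]]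
  unfolding cdist_def by (simp add: cnj_poisson)

lemma tensor_int_bact:
  assumes g: "graph_aut E g"
    and bv: "boundary_value q E o' s \<phi> \<mu>" and inv: "\<forall>x. \<phi> (g x) = \<phi> x"
    and bv': "boundary_value q E o' s' \<phi>' \<mu>'" and inv': "\<forall>x. \<phi>' (g x) = \<phi>' x"
    and H: "separable E H"
  shows "tensor_int \<mu> (cdist \<mu>') (\<lambda>\<omega> \<omega>'. H (bact g \<omega>) (bact g \<omega>') /
      (poisson q E o' s (g o') (bact g \<omega>) * poisson q E o' (- cnj s') (g o') (bact g \<omega>')))
    = tensor_int \<mu> (cdist \<mu>') H"
proof -
  let ?P = "\<lambda>\<omega>. poisson q E o' s (g o') (bact g \<omega>)"
  let ?P' = "\<lambda>\<omega>. poisson q E o' (- cnj s') (g o') (bact g \<omega>)"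
  have \<mu>: "distribution E \<mu>" and \<nu>: "distribution E (cdist \<mu>')"
    using boundary_value_distribution[OF bv] distribution_cdist[OF boundary_value_distribution[OF bv']] .
  obtain L where L: "separable_by E H L" using H unfolding separable_def by blast
  note lc = separable_by_loc_const[OF L]
  have "tensor_int \<mu> (cdist \<mu>') (\<lambda>\<omega> \<omega>'. H (bact g \<omega>) (bact g \<omega>') / (?P \<omega> * ?P' \<omega>'))
      = (\<Sum>p\<leftarrow>L. \<mu> (\<lambda>\<omega>. fst p (bact g \<omega>) / ?P \<omega>) * cdist \<mu>' (\<lambda>\<omega>'. snd p (bact g \<omega>') / ?P' \<omega>'))"
    using tensor_int_separable_by[OF \<mu> \<nu> separable_by_bact_divide[OF g L]]
      loc_const_bact[OF g loc_const_poisson] by (simp add: o_def)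
  also have "\<dots> = (\<Sum>p\<leftarrow>L. \<mu> (fst p) * cdist \<mu>' (snd p))"
    using lc by (simp add: boundary_value_bact[OF g bv inv] cdist_boundary_value_bact[OF g bv' inv']
        cong: map_cong)
  also have "\<dots> = tensor_int \<mu> (cdist \<mu>') H" using tensor_int_separable_by[OF \<mu> \<nu> L] by simp
  finally show ?thesis .
qed

end

section \<open>Changing the cutoff\<close>

lemma tree_lattice_graph_aut: "tree_lattice E \<Gamma> \<Longrightarrow> \<gamma> \<in> \<Gamma> \<Longrightarrow> graph_aut E \<gamma>"
  unfolding tree_lattice_def graph_aut_def by blast

lemma tree_lattice_inv: "tree_lattice E \<Gamma> \<Longrightarrow> \<gamma> \<in> \<Gamma> \<Longrightarrow> inv \<gamma> \<in> \<Gamma>"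
  unfolding tree_lattice_def by blast

lemma tree_lattice_free:
  assumes \<Gamma>: "tree_lattice E \<Gamma>" and \<gamma>: "\<gamma> \<in> \<Gamma>" "\<gamma>' \<in> \<Gamma>" and eq: "\<gamma> x = \<gamma>' x"
  shows "\<gamma> = \<gamma>'"
proof -
  have aut: "graph_aut E \<gamma>'" using tree_lattice_graph_aut[OF \<Gamma> \<gamma>(2)] .
  have comp: "\<forall>\<gamma>\<in>\<Gamma>. \<forall>\<delta>\<in>\<Gamma>. \<gamma> \<circ> \<delta> \<in> \<Gamma>" and free: "\<forall>\<gamma>\<in>\<Gamma>. \<forall>x. \<gamma> x = x \<longrightarrow> \<gamma> = id"
    using \<Gamma> unfolding tree_lattice_def by blast+
  have "inv \<gamma>' \<circ> \<gamma> \<in> \<Gamma>" using comp tree_lattice_inv[OF \<Gamma> \<gamma>(2)] \<gamma>(1) by blast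
  moreover have "(inv \<gamma>' \<circ> \<gamma>) x = x" using eq aut by simp
  ultimately have id: "inv \<gamma>' \<circ> \<gamma> = id" using free by blast
  show ?thesis
  proof
    fix z
    have "\<gamma> z = \<gamma>' ((inv \<gamma>' \<circ> \<gamma>) z)" using aut by simp
    then show "\<gamma> z = \<gamma>' z" unfolding id by simp
  qed
qed

lemma finite_tree_lattice_transporters:
  assumes \<Gamma>: "tree_lattice E \<Gamma>" and "finite S1" "finite S2"
  shows "finite {\<gamma> \<in> \<Gamma>. \<exists>x\<in>S1. \<gamma> x \<in> S2}"
proof -
  have "{\<gamma> \<in> \<Gamma>. \<exists>x\<in>S1. \<gamma> x \<in> S2} \<subseteq> (\<Union>x\<in>S1. \<Union>y\<in>S2. {\<gamma> \<in> \<Gamma>. \<gamma> x = y})" by blast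
  moreover have "finite {\<gamma> \<in> \<Gamma>. \<gamma> x = y}" for x y
  proof (cases "{\<gamma> \<in> \<Gamma>. \<gamma> x = y} = {}")
    case False
    then obtain \<gamma>0 where "\<gamma>0 \<in> \<Gamma>" "\<gamma>0 x = y" by blast
    then have "{\<gamma> \<in> \<Gamma>. \<gamma> x = y} \<subseteq> {\<gamma>0}" using tree_lattice_free[OF \<Gamma>] by auto
    then show ?thesis using finite_subset by blast
  qed (simp only: finite.emptyI)
  ultimately show ?thesis using assms by (meson finite_UN_I finite_subset)
qed

definition cutoff_support :: "('v \<Rightarrow> 'v \<Rightarrow> bool) \<Rightarrow> ('v \<Rightarrow> 'v bdry \<Rightarrow> complex) \<Rightarrow> 'v set" where
  "cutoff_support E \<Xi> = {x. \<exists>\<omega>\<in>boundary E. \<Xi> x \<omega> \<noteq> 0}"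

lemma cutoff_support_finite: "cutoff E \<Gamma> \<Xi> \<Longrightarrow> finite (cutoff_support E \<Xi>)"
  and cutoff_loc_const: "cutoff E \<Gamma> \<Xi> \<Longrightarrow> loc_const E (\<Xi> x)"
  unfolding cutoff_def cutoff_support_def by blast+

lemma cutoff_vanishes: "\<omega> \<in> boundary E \<Longrightarrow> x \<notin> cutoff_support E \<Xi> \<Longrightarrow> \<Xi> x \<omega> = 0"
  unfolding cutoff_support_def by blast

lemma cutoff_sum_superset:
  assumes "cutoff E \<Gamma> \<Xi>" "\<omega> \<in> boundary E" "finite G" "G \<subseteq> \<Gamma>"
    and "{\<gamma> \<in> \<Gamma>. \<Xi> (\<gamma> x) (bact \<gamma> \<omega>) \<noteq> 0} \<subseteq> G"
  shows "(\<Sum>\<gamma>\<in>G. \<Xi> (\<gamma> x) (bact \<gamma> \<omega>)) = 1"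
proof -
  have "(\<Sum>\<gamma>\<in>G. \<Xi> (\<gamma> x) (bact \<gamma> \<omega>)) = (\<Sum>\<gamma>\<in>{\<gamma> \<in> \<Gamma>. \<Xi> (\<gamma> x) (bact \<gamma> \<omega>) \<noteq> 0}. \<Xi> (\<gamma> x) (bact \<gamma> \<omega>))"
    using assms(3-5) by (intro sum.mono_neutral_right) auto
  also have "\<dots> = 1" using assms(1,2) unfolding cutoff_def by blast
  finally show ?thesis .
qed

lemma cutoff_sum_inv_superset:
  assumes \<Xi>: "cutoff E \<Gamma> \<Xi>" and \<Gamma>: "tree_lattice E \<Gamma>" and \<eta>: "\<eta> \<in> boundary E"
    and G: "finite G" "G \<subseteq> \<Gamma>" and covers: "\<And>\<delta>. \<delta> \<in> \<Gamma> \<Longrightarrow> \<Xi> (\<delta> y) (bact \<delta> \<eta>) \<noteq> 0 \<Longrightarrow> inv \<delta> \<in> G"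
  shows "(\<Sum>\<gamma>\<in>G. \<Xi> (inv \<gamma> y) (bact (inv \<gamma>) \<eta>)) = 1"
proof -
  have bij: "bij \<gamma>" if "\<gamma> \<in> \<Gamma>" for \<gamma>
    using tree_lattice_graph_aut[OF \<Gamma> that] unfolding graph_aut_def by blast
  have "inj_on inv G" using G(2) bij by (intro inj_onI) (metis inv_inv_eq subsetD)
  then have "(\<Sum>\<gamma>\<in>G. \<Xi> (inv \<gamma> y) (bact (inv \<gamma>) \<eta>)) = (\<Sum>\<delta>\<in>inv ` G. \<Xi> (\<delta> y) (bact \<delta> \<eta>))"
    by (simp add: sum.reindex)
  also have "\<dots> = 1"
  proof (rule cutoff_sum_superset[OF \<Xi> \<eta>])
    show "finite (inv ` G)" "inv ` G \<subseteq> \<Gamma>" using G tree_lattice_inv[OF \<Gamma>] by auto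
    show "{\<delta> \<in> \<Gamma>. \<Xi> (\<delta> y) (bact \<delta> \<eta>) \<noteq> 0} \<subseteq> inv ` G"
    proof
      fix \<delta> assume \<delta>: "\<delta> \<in> {\<delta> \<in> \<Gamma>. \<Xi> (\<delta> y) (bact \<delta> \<eta>) \<noteq> 0}"
      then have "inv (inv \<delta>) = \<delta>" using bij inv_inv_eq by blast
      moreover have "inv \<delta> \<in> G" using \<delta> covers by blast
      ultimately show "\<delta> \<in> inv ` G" by (metis imageI)
    qed
  qed
  finally show ?thesis .
qed

context locally_finite_tree
begin

context
  fixes q :: nat and o' :: 'v and s s' :: complex
    and \<Gamma> :: "('v \<Rightarrow> 'v) set" and \<phi> \<phi>' :: "'v \<Rightarrow> complex" and \<mu> \<mu>' :: "('v bdry \<Rightarrow> complex) \<Rightarrow> complex"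
    and b :: "'v \<Rightarrow> 'v bdry \<Rightarrow> 'v bdry \<Rightarrow> complex"
  assumes \<Gamma>: "tree_lattice E \<Gamma>"
    and bv: "boundary_value q E o' s \<phi> \<mu>" and inv: "\<forall>\<gamma>\<in>\<Gamma>. \<forall>x. \<phi> (\<gamma> x) = \<phi> x"
    and bv': "boundary_value q E o' s' \<phi>' \<mu>'" and inv': "\<forall>\<gamma>\<in>\<Gamma>. \<forall>x. \<phi>' (\<gamma> x) = \<phi>' x"
    and b_separable: "\<And>x. separable E (b x)"
    and b_inv: "\<And>\<gamma> x \<omega> \<omega>'. \<gamma> \<in> \<Gamma> \<Longrightarrow> \<omega> \<in> boundary E \<Longrightarrow> \<omega>' \<in> boundary E \<Longrightarrow>
      b (\<gamma> x) (bact \<gamma> \<omega>) (bact \<gamma> \<omega>') = b x \<omega> \<omega>'"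
begin

lemma boundary_value_distributions: "distribution E \<mu>" "distribution E (cdist \<mu>')"
  using boundary_value_distribution[OF bv] distribution_cdist[OF boundary_value_distribution[OF bv']] .

text \<open>Substituting \<open>(\<gamma>\<omega>, \<gamma>\<omega>')\<close> for \<open>(\<omega>, \<omega>')\<close>: the Poisson kernels pick up the factor of
  \<open>poisson_bact\<close>, which \<open>tensor_int_bact\<close> absorbs.\<close>

lemma tensor_int_weight_translate:
  assumes \<gamma>: "\<gamma> \<in> \<Gamma>" and S: "finite S" "finite S'" and w: "\<And>y. loc_const E (w y)"
    and supp: "\<And>x \<omega>. \<omega> \<in> boundary E \<Longrightarrow> w (\<gamma> x) (bact \<gamma> \<omega>) \<noteq> 0 \<Longrightarrow> x \<in> S"
    and supp': "\<And>y \<eta>. \<eta> \<in> boundary E \<Longrightarrow> w y \<eta> \<noteq> 0 \<Longrightarrow> y \<in> S'"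
  shows "tensor_int \<mu> (cdist \<mu>') (\<lambda>\<omega> \<omega>'. \<Sum>x\<in>S. w (\<gamma> x) (bact \<gamma> \<omega>) * b x \<omega> \<omega>' *
        poisson q E o' s x \<omega> * poisson q E o' (- cnj s') x \<omega>')
    = tensor_int \<mu> (cdist \<mu>') (\<lambda>\<eta> \<eta>'. \<Sum>y\<in>S'. w y \<eta> * b y \<eta> \<eta>' *
        poisson q E o' s y \<eta> * poisson q E o' (- cnj s') y \<eta>')"
    (is "tensor_int _ _ ?L = tensor_int _ _ ?H")
proof -
  have g: "graph_aut E \<gamma>" using tree_lattice_graph_aut[OF \<Gamma> \<gamma>] .
  define P where "P \<omega> \<omega>' =
    poisson q E o' s (\<gamma> o') (bact \<gamma> \<omega>) * poisson q E o' (- cnj s') (\<gamma> o') (bact \<gamma> \<omega>')" for \<omega> \<omega>'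
  have "?L \<omega> \<omega>' = ?H (bact \<gamma> \<omega>) (bact \<gamma> \<omega>') / P \<omega> \<omega>'"
    if \<omega>: "\<omega> \<in> boundary E" "\<omega>' \<in> boundary E" for \<omega> \<omega>'
  proof -
    let ?G = "\<lambda>y. w y (bact \<gamma> \<omega>) * b y (bact \<gamma> \<omega>) (bact \<gamma> \<omega>') *
      poisson q E o' s y (bact \<gamma> \<omega>) * poisson q E o' (- cnj s') y (bact \<gamma> \<omega>')"
    have G: "?G (\<gamma> x) = w (\<gamma> x) (bact \<gamma> \<omega>) * b x \<omega> \<omega>' * poisson q E o' s x \<omega> *
        poisson q E o' (- cnj s') x \<omega>' * P \<omega> \<omega>'" for x
      unfolding P_def b_inv[OF \<gamma> \<omega>] poisson_bact[OF g \<omega>(1), where s = s and x = x]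
        poisson_bact[OF g \<omega>(2), where s = "- cnj s'" and x = x] by (simp add: mult_ac)
    have P: "P \<omega> \<omega>' \<noteq> 0" unfolding P_def by (simp add: poisson_nonzero)
    have "?L \<omega> \<omega>' = (\<Sum>x\<in>S. ?G (\<gamma> x) / P \<omega> \<omega>')"
      unfolding G using P by simp
    also have "\<dots> = (\<Sum>x\<in>S. ?G (\<gamma> x)) / P \<omega> \<omega>'" by (simp add: sum_divide_distrib)
    also have "(\<Sum>x\<in>S. ?G (\<gamma> x)) = sum ?G (\<gamma> ` S)"
      using inj_on_subset[OF graph_aut_inj[OF g] subset_UNIV] by (simp add: sum.reindex o_def)
    also have "\<dots> = sum ?G (\<gamma> ` S \<union> S')"
    proof (rule sum.mono_neutral_left)
      show "\<forall>y\<in>\<gamma> ` S \<union> S' - \<gamma> ` S. ?G y = 0"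
      proof
        fix y assume y: "y \<in> \<gamma> ` S \<union> S' - \<gamma> ` S"
        have "w (\<gamma> (inv \<gamma> y)) (bact \<gamma> \<omega>) = 0"
        proof (rule ccontr)
          assume "w (\<gamma> (inv \<gamma> y)) (bact \<gamma> \<omega>) \<noteq> 0"
          then have "\<gamma> (inv \<gamma> y) \<in> \<gamma> ` S" using supp[OF \<omega>(1)] by blast
          then show False using y g by simp
        qed
        then show "?G y = 0" using g by simp
      qed
    qed (use S in auto)
    also have "\<dots> = ?H (bact \<gamma> \<omega>) (bact \<gamma> \<omega>')"
      by (rule sum.mono_neutral_right) (use S supp' bact_boundary[OF g \<omega>(1)] in auto)
    finally show ?thesis .
  qed
  then have "tensor_int \<mu> (cdist \<mu>') ?L
      = tensor_int \<mu> (cdist \<mu>') (\<lambda>\<omega> \<omega>'. ?H (bact \<gamma> \<omega>) (bact \<gamma> \<omega>') / P \<omega> \<omega>')"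
    by (intro tensor_int_cong[OF boundary_value_distributions] separable_sum[OF S(1)]
        separable_poisson_weighted loc_const_bact[OF g] w b_separable) simp
  also have "\<dots> = tensor_int \<mu> (cdist \<mu>') ?H"
    unfolding P_def using inv inv' \<gamma>
    by (intro tensor_int_bact[OF g bv _ bv'] separable_sum[OF S(2)] separable_poisson_weighted
        w b_separable) auto
  finally show ?thesis .
qed

lemma tensor_int_insert_partition:
  assumes S: "finite S" "finite G" and v: "\<And>x. loc_const E (v x)"
    and u: "\<And>\<gamma> x. \<gamma> \<in> G \<Longrightarrow> loc_const E (u \<gamma> x)"
    and one: "\<And>x \<omega>. x \<in> S \<Longrightarrow> \<omega> \<in> boundary E \<Longrightarrow> (\<Sum>\<gamma>\<in>G. u \<gamma> x \<omega>) = 1"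
  shows "tensor_int \<mu> (cdist \<mu>') (\<lambda>\<omega> \<omega>'. \<Sum>x\<in>S. v x \<omega> * b x \<omega> \<omega>' *
        poisson q E o' s x \<omega> * poisson q E o' (- cnj s') x \<omega>')
    = (\<Sum>\<gamma>\<in>G. tensor_int \<mu> (cdist \<mu>') (\<lambda>\<omega> \<omega>'. \<Sum>x\<in>S. v x \<omega> * u \<gamma> x \<omega> * b x \<omega> \<omega>' *
        poisson q E o' s x \<omega> * poisson q E o' (- cnj s') x \<omega>'))"
proof -
  have "tensor_int \<mu> (cdist \<mu>') (\<lambda>\<omega> \<omega>'. \<Sum>x\<in>S. v x \<omega> * b x \<omega> \<omega>' *
        poisson q E o' s x \<omega> * poisson q E o' (- cnj s') x \<omega>')
      = tensor_int \<mu> (cdist \<mu>') (\<lambda>\<omega> \<omega>'. \<Sum>\<gamma>\<in>G. \<Sum>x\<in>S. v x \<omega> * u \<gamma> x \<omega> * b x \<omega> \<omega>' *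
        poisson q E o' s x \<omega> * poisson q E o' (- cnj s') x \<omega>')"
  proof (rule tensor_int_cong[OF boundary_value_distributions])
    show "separable E (\<lambda>\<omega> \<omega>'. \<Sum>x\<in>S. v x \<omega> * b x \<omega> \<omega>' *
        poisson q E o' s x \<omega> * poisson q E o' (- cnj s') x \<omega>')"
      using S v by (intro separable_sum separable_poisson_weighted b_separable)
    fix \<omega> \<omega>' assume "\<omega> \<in> boundary E"
    then show "(\<Sum>x\<in>S. v x \<omega> * b x \<omega> \<omega>' * poisson q E o' s x \<omega> * poisson q E o' (- cnj s') x \<omega>')
      = (\<Sum>\<gamma>\<in>G. \<Sum>x\<in>S. v x \<omega> * u \<gamma> x \<omega> * b x \<omega> \<omega>' *
        poisson q E o' s x \<omega> * poisson q E o' (- cnj s') x \<omega>')"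
      using one by (subst sum.swap) (simp add: sum_distrib_left[symmetric] sum_distrib_right[symmetric])
  qed
  also have "\<dots> = (\<Sum>\<gamma>\<in>G. tensor_int \<mu> (cdist \<mu>') (\<lambda>\<omega> \<omega>'. \<Sum>x\<in>S. v x \<omega> * u \<gamma> x \<omega> * b x \<omega> \<omega>' *
        poisson q E o' s x \<omega> * poisson q E o' (- cnj s') x \<omega>'))"
    using S v u
    by (intro tensor_int_sum[OF boundary_value_distributions] separable_sum separable_poisson_weighted
        loc_const_mult b_separable) auto
  finally show ?thesis .
qed

lemma tensor_int_cutoff_product_translate:
  assumes \<Xi>1: "cutoff E \<Gamma> \<Xi>1" and \<Xi>2: "cutoff E \<Gamma> \<Xi>2" and \<gamma>: "\<gamma> \<in> \<Gamma>"
  shows "tensor_int \<mu> (cdist \<mu>') (\<lambda>\<omega> \<omega>'. \<Sum>x\<in>cutoff_support E \<Xi>1. \<Xi>1 x \<omega> * \<Xi>2 (\<gamma> x) (bact \<gamma> \<omega>) *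
        b x \<omega> \<omega>' * poisson q E o' s x \<omega> * poisson q E o' (- cnj s') x \<omega>')
    = tensor_int \<mu> (cdist \<mu>') (\<lambda>\<eta> \<eta>'. \<Sum>y\<in>cutoff_support E \<Xi>2. \<Xi>2 y \<eta> * \<Xi>1 (inv \<gamma> y) (bact (inv \<gamma>) \<eta>) *
        b y \<eta> \<eta>' * poisson q E o' s y \<eta> * poisson q E o' (- cnj s') y \<eta>')"
proof -
  have g: "graph_aut E \<gamma>" "graph_aut E (inv \<gamma>)"
    using tree_lattice_graph_aut[OF \<Gamma>] tree_lattice_inv[OF \<Gamma>] \<gamma> by blast+
  let ?w = "\<lambda>y \<eta>. \<Xi>2 y \<eta> * \<Xi>1 (inv \<gamma> y) (bact (inv \<gamma>) \<eta>)"
  have "tensor_int \<mu> (cdist \<mu>') (\<lambda>\<omega> \<omega>'. \<Sum>x\<in>cutoff_support E \<Xi>1. ?w (\<gamma> x) (bact \<gamma> \<omega>) * b x \<omega> \<omega>' *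
        poisson q E o' s x \<omega> * poisson q E o' (- cnj s') x \<omega>')
      = tensor_int \<mu> (cdist \<mu>') (\<lambda>\<eta> \<eta>'. \<Sum>y\<in>cutoff_support E \<Xi>2. ?w y \<eta> * b y \<eta> \<eta>' *
        poisson q E o' s y \<eta> * poisson q E o' (- cnj s') y \<eta>')"
  proof (rule tensor_int_weight_translate[OF \<gamma> cutoff_support_finite[OF \<Xi>1]
        cutoff_support_finite[OF \<Xi>2]])
    show "loc_const E (?w y)" for y
      using loc_const_mult[OF cutoff_loc_const[OF \<Xi>2] loc_const_bact[OF g(2) cutoff_loc_const[OF \<Xi>1]]] .
    show "x \<in> cutoff_support E \<Xi>1" if "\<omega> \<in> boundary E" "?w (\<gamma> x) (bact \<gamma> \<omega>) \<noteq> 0" for x \<omega>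
      using that cutoff_vanishes[OF that(1)] g(1) by auto
    show "y \<in> cutoff_support E \<Xi>2" if "\<eta> \<in> boundary E" "?w y \<eta> \<noteq> 0" for y \<eta>
      using that cutoff_vanishes[OF that(1)] by auto
  qed
  then show ?thesis using g(1) by (simp add: mult_ac)
qed

text \<open>The usual unfolding argument: insert \<open>1 = \<Sum>\<^sub>\<gamma> \<Xi>\<^sub>2(\<gamma>x, \<gamma>\<omega>)\<close>, move each \<open>\<gamma>\<close> to the
  other factor, and sum out \<open>\<Xi>\<^sub>1\<close> instead.\<close>

lemma tensor_int_change_cutoff:
  assumes \<Xi>1: "cutoff E \<Gamma> \<Xi>1" and \<Xi>2: "cutoff E \<Gamma> \<Xi>2"
  shows "tensor_int \<mu> (cdist \<mu>') (\<lambda>\<omega> \<omega>'. \<Sum>x\<in>cutoff_support E \<Xi>1. \<Xi>1 x \<omega> * b x \<omega> \<omega>' *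
        poisson q E o' s x \<omega> * poisson q E o' (- cnj s') x \<omega>')
    = tensor_int \<mu> (cdist \<mu>') (\<lambda>\<omega> \<omega>'. \<Sum>x\<in>cutoff_support E \<Xi>2. \<Xi>2 x \<omega> * b x \<omega> \<omega>' *
        poisson q E o' s x \<omega> * poisson q E o' (- cnj s') x \<omega>')"
proof -
  define S1 S2 where "S1 = cutoff_support E \<Xi>1" and "S2 = cutoff_support E \<Xi>2"
  define \<Gamma>0 where "\<Gamma>0 = {\<gamma> \<in> \<Gamma>. \<exists>x\<in>S1. \<gamma> x \<in> S2}"
  have S: "finite S1" "finite S2" using \<Xi>1 \<Xi>2 cutoff_support_finite unfolding S1_def S2_def by blast+
  have \<Gamma>0: "finite \<Gamma>0" "\<Gamma>0 \<subseteq> \<Gamma>"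
    unfolding \<Gamma>0_def using finite_tree_lattice_transporters[OF \<Gamma> S] by auto
  have aut: "graph_aut E \<gamma>" "graph_aut E (inv \<gamma>)" if "\<gamma> \<in> \<Gamma>" for \<gamma>
    using that tree_lattice_graph_aut[OF \<Gamma>] tree_lattice_inv[OF \<Gamma>] by blast+
  have vanish: "\<omega> \<in> boundary E \<Longrightarrow> x \<notin> S1 \<Longrightarrow> \<Xi>1 x \<omega> = 0" "\<omega> \<in> boundary E \<Longrightarrow> x \<notin> S2 \<Longrightarrow> \<Xi>2 x \<omega> = 0"
    for x \<omega> unfolding S1_def S2_def by (simp_all add: cutoff_vanishes)
  note lc = cutoff_loc_const[OF \<Xi>1] cutoff_loc_const[OF \<Xi>2]
  have "tensor_int \<mu> (cdist \<mu>') (\<lambda>\<omega> \<omega>'. \<Sum>x\<in>S1. \<Xi>1 x \<omega> * b x \<omega> \<omega>' *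
        poisson q E o' s x \<omega> * poisson q E o' (- cnj s') x \<omega>')
      = (\<Sum>\<gamma>\<in>\<Gamma>0. tensor_int \<mu> (cdist \<mu>') (\<lambda>\<omega> \<omega>'. \<Sum>x\<in>S1. \<Xi>1 x \<omega> * \<Xi>2 (\<gamma> x) (bact \<gamma> \<omega>) *
        b x \<omega> \<omega>' * poisson q E o' s x \<omega> * poisson q E o' (- cnj s') x \<omega>'))"
  proof (rule tensor_int_insert_partition[OF S(1) \<Gamma>0(1) lc(1)])
    show "loc_const E (\<lambda>\<omega>. \<Xi>2 (\<gamma> x) (bact \<gamma> \<omega>))" if "\<gamma> \<in> \<Gamma>0" for \<gamma> x
      using loc_const_bact[OF aut(1) lc(2)] \<Gamma>0(2) that by blast
    show "(\<Sum>\<gamma>\<in>\<Gamma>0. \<Xi>2 (\<gamma> x) (bact \<gamma> \<omega>)) = 1" if "x \<in> S1" "\<omega> \<in> boundary E" for x \<omega>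
      using cutoff_sum_superset[OF \<Xi>2 that(2) \<Gamma>0] that vanish(2)[OF bact_boundary[OF aut(1)]]
      unfolding \<Gamma>0_def by blast
  qed
  also have "\<dots> = (\<Sum>\<gamma>\<in>\<Gamma>0. tensor_int \<mu> (cdist \<mu>') (\<lambda>\<eta> \<eta>'. \<Sum>y\<in>S2. \<Xi>2 y \<eta> *
        \<Xi>1 (inv \<gamma> y) (bact (inv \<gamma>) \<eta>) * b y \<eta> \<eta>' *
        poisson q E o' s y \<eta> * poisson q E o' (- cnj s') y \<eta>'))"
    unfolding S1_def S2_def using \<Gamma>0(2)
    by (intro sum.cong refl tensor_int_cutoff_product_translate[OF \<Xi>1 \<Xi>2]) auto
  also have "\<dots> = tensor_int \<mu> (cdist \<mu>') (\<lambda>\<eta> \<eta>'. \<Sum>y\<in>S2. \<Xi>2 y \<eta> * b y \<eta> \<eta>' *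
        poisson q E o' s y \<eta> * poisson q E o' (- cnj s') y \<eta>')"
  proof (rule tensor_int_insert_partition[OF S(2) \<Gamma>0(1) lc(2), symmetric])
    show "loc_const E (\<lambda>\<eta>. \<Xi>1 (inv \<gamma> y) (bact (inv \<gamma>) \<eta>))" if "\<gamma> \<in> \<Gamma>0" for \<gamma> y
      using loc_const_bact[OF aut(2) lc(1)] \<Gamma>0(2) that by blast
    show "(\<Sum>\<gamma>\<in>\<Gamma>0. \<Xi>1 (inv \<gamma> y) (bact (inv \<gamma>) \<eta>)) = 1" if "y \<in> S2" "\<eta> \<in> boundary E" for y \<eta>
    proof (rule cutoff_sum_inv_superset[OF \<Xi>1 \<Gamma> that(2) \<Gamma>0])
      fix \<delta> assume "\<delta> \<in> \<Gamma>" "\<Xi>1 (\<delta> y) (bact \<delta> \<eta>) \<noteq> 0"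
      then have "\<delta> y \<in> S1" "inv \<delta> \<in> \<Gamma>" "inv \<delta> (\<delta> y) = y"
        using vanish(1)[OF bact_boundary[OF aut(1)]] that(2) tree_lattice_inv[OF \<Gamma>]
          graph_aut_inv_apply[OF aut(1)] by auto
      then show "inv \<delta> \<in> \<Gamma>0" unfolding \<Gamma>0_def using that(1) by force
    qed
  qed
  finally show ?thesis unfolding S1_def S2_def .
qed

end

end

lemma ray_equiv_line_shift: "ray_equiv (\<lambda>n. g (int n)) (\<lambda>n. g (i + int n))"
proof (cases "0 \<le> i")
  case True
  then have "\<forall>n. g (int (n + nat i)) = g (i + int (n + 0))" by (simp add: add.commute)
  then show ?thesis unfolding ray_equiv_def by blast
next
  case False
  then have "\<forall>n. g (int (n + 0)) = g (i + int (n + nat (- i)))" by simp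
  then show ?thesis unfolding ray_equiv_def by blast
qed

context locally_finite_tree
begin

lemma is_ray_line_forward:
  assumes g: "\<forall>k. E (g k) (g (k + 1)) \<and> g (k + 2) \<noteq> g k"
  shows "is_ray E (\<lambda>n. g (i + int n))"
  unfolding is_ray_def
proof
  fix n
  show "E (g (i + int n)) (g (i + int (Suc n))) \<and> g (i + int (n + 2)) \<noteq> g (i + int n)"
    using g[rule_format, of "i + int n"] by (simp add: ac_simps)
qed

lemma is_ray_line_backward:
  assumes g: "\<forall>k. E (g k) (g (k + 1)) \<and> g (k + 2) \<noteq> g k"
  shows "is_ray E (\<lambda>n. g (i - int n))"
  unfolding is_ray_def
proof
  fix n
  have "E (g (i - int (Suc n))) (g (i - int n))" "g (i - int n) \<noteq> g (i - int (n + 2))"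
    using g[rule_format, of "i - int (Suc n)"] g[rule_format, of "i - int (n + 2)"]
    by (simp_all add: algebra_simps)
  then show "E (g (i - int n)) (g (i - int (Suc n))) \<and> g (i - int (n + 2)) \<noteq> g (i - int n)"
    using edge_sym by auto
qed

lemma mem_geod_imp_ray_to_diverge:
  assumes \<omega>: "\<omega> \<in> boundary E" and \<omega>': "\<omega>' \<in> boundary E" and x: "x \<in> geod E \<omega>' \<omega>"
  shows "ray_to E x \<omega> 1 \<noteq> ray_to E x \<omega>' 1"
proof -
  obtain g :: "int \<Rightarrow> 'v" where g: "\<forall>k. E (g k) (g (k + 1)) \<and> g (k + 2) \<noteq> g k"
    and mem: "(\<lambda>n. g (int n)) \<in> \<omega>" "(\<lambda>n. g (- int n)) \<in> \<omega>'" and "x \<in> range g"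
    using x unfolding geod_def by (auto split: if_splits)
  then obtain i where i: "x = g i" by auto
  have "(\<lambda>n. g (i + int n)) \<in> \<omega>"
    using boundary_closed[OF \<omega> mem(1) is_ray_line_forward[OF g] ray_equiv_line_shift] .
  then have "ray_to E x \<omega> = (\<lambda>n. g (i + int n))" using ray_to_eqI[OF \<omega>] i by simp
  moreover have "ray_equiv (\<lambda>n. g (- int n)) (\<lambda>n. g (i - int n))"
    using ray_equiv_line_shift[of "\<lambda>k. g (- k)" "- i"] by simp
  then have "(\<lambda>n. g (i - int n)) \<in> \<omega>'"
    using boundary_closed[OF \<omega>' mem(2) is_ray_line_backward[OF g]] by blast
  then have "ray_to E x \<omega>' = (\<lambda>n. g (i - int n))" using ray_to_eqI[OF \<omega>'] i by simp
  moreover have "g (i - 1 + 2) \<noteq> g (i - 1)" using g by blast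
  ultimately show ?thesis by (simp add: add.commute)
qed

text \<open>Two rays from \<open>x\<close> that part at \<open>x\<close> make up the geodesic \<open>]\<omega>',\<omega>[\<close>.\<close>

lemma ray_to_diverge_imp_mem_geod:
  assumes \<omega>: "\<omega> \<in> boundary E" and \<omega>': "\<omega>' \<in> boundary E"
    and diverge: "ray_to E x \<omega> 1 \<noteq> ray_to E x \<omega>' 1"
  shows "x \<in> geod E \<omega>' \<omega>"
proof -
  let ?r = "ray_to E x \<omega>" and ?r' = "ray_to E x \<omega>'"
  define g where "g i = (if 0 \<le> i then ?r (nat i) else ?r' (nat (- i)))" for i :: int
  have gpos: "g i = ?r (nat i)" if "0 \<le> i" for i using that unfolding g_def by simp
  have gneg: "g i = ?r' (nat (- i))" if "i \<le> 0" for i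
    using that \<omega> \<omega>' unfolding g_def by (cases "i = 0") auto
  have line: "E (g k) (g (k + 1)) \<and> g (k + 2) \<noteq> g k" for k
  proof -
    consider "0 \<le> k" | "k = -1" | "k + 2 \<le> 0" by arith
    then show ?thesis
    proof cases
      case 1
      then have "nat (k + 1) = Suc (nat k)" "nat (k + 2) = nat k + 2" by arith+
      then show ?thesis using gpos 1 ray_to_edge[OF \<omega>] ray_to_no_backtrack[OF \<omega>] by simp
    next
      case 2
      then show ?thesis using gneg[of k] gneg[of "k + 1"] gpos[of "k + 2"] diverge
          ray_to_edge[OF \<omega>', of x 0] edge_sym by auto
    next
      case 3
      define m where "m = nat (- (k + 2))"
      have "nat (- k) = Suc (Suc m)" "nat (- (k + 1)) = Suc m" unfolding m_def using 3 by arith+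
      then have "g k = ?r' (Suc (Suc m))" "g (k + 1) = ?r' (Suc m)" "g (k + 2) = ?r' m"
        using gneg[of k] gneg[of "k + 1"] gneg[of "k + 2"] 3 unfolding m_def by simp_all
      moreover have "E (?r' (Suc m)) (?r' (Suc (Suc m)))" "?r' (Suc (Suc m)) \<noteq> ?r' m"
        using ray_to_edge[OF \<omega>'] ray_to_no_backtrack[OF \<omega>', of x m] by (simp_all add: numeral_2_eq_2)
      ultimately show ?thesis using edge_sym by metis
    qed
  qed
  moreover have "(\<lambda>n. g (int n)) \<in> \<omega>" "(\<lambda>n. g (- int n)) \<in> \<omega>'"
    using gpos gneg ray_to_mem[OF \<omega>] ray_to_mem[OF \<omega>'] by auto
  moreover have "g 0 = x" using gpos[of 0] \<omega> by simp
  then have "x \<in> range g" by (metis rangeI)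
  ultimately have "\<exists>g :: int \<Rightarrow> 'v. (\<forall>k. E (g k) (g (k + 1)) \<and> g (k + 2) \<noteq> g k) \<and>
      (\<lambda>n. g (int n)) \<in> \<omega> \<and> (\<lambda>n. g (- int n)) \<in> \<omega>' \<and> x \<in> range g"
    by blast
  moreover have "\<omega> \<noteq> \<omega>'" using diverge by auto
  ultimately show ?thesis unfolding geod_def by simp
qed

lemma mem_geod_iff:
  "\<omega> \<in> boundary E \<Longrightarrow> \<omega>' \<in> boundary E \<Longrightarrow> x \<in> geod E \<omega>' \<omega> \<longleftrightarrow> ray_to E x \<omega> 1 \<noteq> ray_to E x \<omega>' 1"
  using mem_geod_imp_ray_to_diverge ray_to_diverge_imp_mem_geod by blast

lemma ray_to_Suc_eq_iff:
  assumes \<omega>: "\<omega> \<in> boundary E" and \<omega>': "\<omega>' \<in> boundary E"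
  shows "ray_to E x \<omega> (Suc n) = ray_to E x \<omega>' (Suc n) \<longleftrightarrow>
    ray_to E (ray_to E x \<omega> n) \<omega> 1 = ray_to E (ray_to E x \<omega> n) \<omega>' 1"
proof
  assume eq: "ray_to E x \<omega> (Suc n) = ray_to E x \<omega>' (Suc n)"
  then have "ray_to E x \<omega> n = ray_to E x \<omega>' n" using ray_to_prefix[OF \<omega> \<omega>' eq] by simp
  then show "ray_to E (ray_to E x \<omega> n) \<omega> 1 = ray_to E (ray_to E x \<omega> n) \<omega>' 1"
    using eq ray_to_add[OF \<omega>, of x n 1] ray_to_add[OF \<omega>', of x n 1] by simp
next
  let ?z = "ray_to E x \<omega> n"
  assume eq: "ray_to E ?z \<omega> 1 = ray_to E ?z \<omega>' 1"
  have "ray_to E x \<omega> (n - 1 + 2) \<noteq> ray_to E x \<omega> (n - 1)" using ray_to_no_backtrack[OF \<omega>] .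
  then have "0 < n \<Longrightarrow> ray_to E x \<omega> (n - 1) \<noteq> ray_to E ?z \<omega>' 1"
    using eq ray_to_add[OF \<omega>, of x n 1] by (simp add: Suc_diff_Suc numeral_2_eq_2)
  from ray_to_append[OF \<omega>' is_ray_walk[OF is_ray_ray_to[OF \<omega>]]
      is_ray_nonbacktracking[OF is_ray_ray_to[OF \<omega>]] refl this, of "Suc n"]
  have "ray_to E x \<omega>' (Suc n) = ray_to E ?z \<omega>' 1" using \<omega> by simp
  then show "ray_to E x \<omega> (Suc n) = ray_to E x \<omega>' (Suc n)" using eq ray_to_add[OF \<omega>, of x n 1] by simp
qed

lemma in_S_imp_ray_to_diverge:
  assumes \<omega>: "\<omega> \<in> boundary E" and \<omega>': "\<omega>' \<in> boundary E" and S: "in_S E n x \<omega> \<omega>'"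
  shows "ray_to E x \<omega> (Suc n) \<noteq> ray_to E x \<omega>' (Suc n)"
proof -
  obtain z where z: "z \<in> geod E \<omega> \<omega>'" "tdist E x z \<le> n" using S unfolding in_S_def by blast
  have diverge: "ray_to E z \<omega> 1 \<noteq> ray_to E z \<omega>' 1" using z(1) mem_geod_iff[OF \<omega>' \<omega>] by simp
  define d where "d = tdist E x z"
  obtain p where p: "walk E p d" "nonbacktracking p d" "p 0 = x" "p d = z"
    unfolding d_def by (rule obtain_geodesic)
  show ?thesis
  proof
    assume eq: "ray_to E x \<omega> (Suc n) = ray_to E x \<omega>' (Suc n)"
    have "ray_to E x \<omega> d = z \<or> ray_to E x \<omega>' d = z"
    proof (cases "p (d - 1) = ray_to E z \<omega> 1")
      case True
      then have "0 < d \<Longrightarrow> p (d - 1) \<noteq> ray_to E z \<omega>' 1" using diverge by simp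
      from ray_to_append[OF \<omega>' p(1,2,4) this, of d] show ?thesis using p(3,4) by simp
    next
      case False
      from ray_to_append[OF \<omega> p(1,2,4), of d] False show ?thesis using p(3,4) by simp
    qed
    moreover have "ray_to E x \<omega> d = ray_to E x \<omega>' d" "ray_to E x \<omega> (d + 1) = ray_to E x \<omega>' (d + 1)"
      using ray_to_prefix[OF \<omega> \<omega>' eq] z(2) unfolding d_def by auto
    ultimately show False
      using diverge ray_to_add[OF \<omega>, of x d 1] ray_to_add[OF \<omega>', of x d 1] by auto
  qed
qed

lemma ray_to_diverge_imp_in_S:
  assumes \<omega>: "\<omega> \<in> boundary E" and \<omega>': "\<omega>' \<in> boundary E"
    and ne: "ray_to E x \<omega> (Suc n) \<noteq> ray_to E x \<omega>' (Suc n)"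
  shows "in_S E n x \<omega> \<omega>'"
proof -
  define m where "m = (LEAST m. ray_to E x \<omega> (Suc m) \<noteq> ray_to E x \<omega>' (Suc m))"
  have m: "ray_to E x \<omega> (Suc m) \<noteq> ray_to E x \<omega>' (Suc m)" "m \<le> n"
    unfolding m_def
    by (rule LeastI[where P = "\<lambda>m. ray_to E x \<omega> (Suc m) \<noteq> ray_to E x \<omega>' (Suc m)", OF ne],
        rule Least_le, rule ne)
  have "ray_to E x \<omega> m = ray_to E x \<omega>' m"
  proof (cases m)
    case (Suc m')
    then show ?thesis using not_less_Least[of m' "\<lambda>m. ray_to E x \<omega> (Suc m) \<noteq> ray_to E x \<omega>' (Suc m)"]
      unfolding m_def[symmetric] by simp
  qed (use \<omega> \<omega>' in simp)
  then have "ray_to E x \<omega> m \<in> geod E \<omega> \<omega>'"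
    using m(1) mem_geod_iff[OF \<omega>' \<omega>] ray_to_add[OF \<omega>, of x m 1] ray_to_add[OF \<omega>', of x m 1] by simp
  moreover have "tdist E x (ray_to E x \<omega> m) \<le> n" using tdist_ray_to[OF \<omega>] m(2) by simp
  moreover have "\<omega> \<noteq> \<omega>'" using ne by auto
  ultimately show ?thesis unfolding in_S_def by blast
qed

lemma in_S_iff:
  "\<omega> \<in> boundary E \<Longrightarrow> \<omega>' \<in> boundary E \<Longrightarrow>
   in_S E n x \<omega> \<omega>' \<longleftrightarrow> ray_to E x \<omega> (Suc n) \<noteq> ray_to E x \<omega>' (Suc n)"
  using in_S_imp_ray_to_diverge ray_to_diverge_imp_in_S by blast

lemma shift_sum_eq:
  assumes \<omega>: "\<omega> \<in> boundary E"
  shows "shift_sum E n a z \<omega> = (\<Sum>y\<in>{y. ray_to E y \<omega> n = z}. a y \<omega>)"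
proof -
  have "tdist E y z = n \<and> z \<in> rayset E y \<omega> \<longleftrightarrow> ray_to E y \<omega> n = z" for y
  proof
    assume "tdist E y z = n \<and> z \<in> rayset E y \<omega>"
    then obtain i where "z = ray_to E y \<omega> i" "tdist E y z = n" unfolding rayset_def by blast
    then show "ray_to E y \<omega> n = z" using tdist_ray_to[OF \<omega>] by simp
  next
    assume "ray_to E y \<omega> n = z"
    then show "tdist E y z = n \<and> z \<in> rayset E y \<omega>"
      using tdist_ray_to[OF \<omega>] unfolding rayset_def by blast
  qed
  then show ?thesis unfolding shift_sum_def by simp
qed

lemma finite_ray_to_preimage:
  assumes "\<omega> \<in> boundary E"
  shows "finite {y. ray_to E y \<omega> n = z}"
proof (rule finite_subset[OF _ finite_tdist_ball[of z n]])
  show "{y. ray_to E y \<omega> n = z} \<subseteq> {y. tdist E z y \<le> n}"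
  proof
    fix y assume "y \<in> {y. ray_to E y \<omega> n = z}"
    then have "tdist E y z = n" using tdist_ray_to[OF assms, of y n] by simp
    then show "y \<in> {y. tdist E z y \<le> n}" using tdist_sym by simp
  qed
qed

lemma loc_const_ray_to_indicator:
  assumes "loc_const E f"
  shows "loc_const E (\<lambda>\<omega>. if ray_to E x \<omega> k = y then f \<omega> else 0)"
proof (rule loc_const_ray_to_comp[where f = "\<lambda>v \<omega>. if v = y then f \<omega> else 0"])
  show "loc_const E (\<lambda>\<omega>. if v = y then f \<omega> else 0)" for v
    using assms loc_const_const by (cases "v = y") simp_all
qed

lemma loc_const_shift_sum:
  assumes "\<And>y. loc_const E (a y)"
  shows "loc_const E (shift_sum E n a z)"
proof (rule loc_const_cong)
  let ?Y = "{y. tdist E z y \<le> n}"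
  show "loc_const E (\<lambda>\<omega>. \<Sum>y\<in>?Y. if ray_to E y \<omega> n = z then a y \<omega> else 0)"
    by (rule loc_const_sum[OF finite_tdist_ball loc_const_ray_to_indicator[OF assms]])
  fix \<omega> assume \<omega>: "\<omega> \<in> boundary E"
  have "{y. ray_to E y \<omega> n = z} = {y \<in> ?Y. ray_to E y \<omega> n = z}"
    using tdist_ray_to[OF \<omega>] tdist_sym by auto
  then show "(\<Sum>y\<in>?Y. if ray_to E y \<omega> n = z then a y \<omega> else 0) = shift_sum E n a z \<omega>"
    unfolding shift_sum_eq[OF \<omega>] by (simp only: sum.inter_filter[OF finite_tdist_ball])
qed

text \<open>Pairs \<open>(\<omega>, \<omega>')\<close> whose rays from \<open>x\<close> agree for \<open>k\<close> steps: a finite union of products of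
  cones.\<close>

lemma separable_ray_to_agree:
  assumes "loc_const E f"
  shows "separable E (\<lambda>\<omega> \<omega>'. if ray_to E x \<omega> k = ray_to E x \<omega>' k then f \<omega> else 0)"
proof (rule separable_cong)
  let ?Y = "{y. tdist E x y \<le> k}"
  show "separable E (\<lambda>\<omega> \<omega>'. \<Sum>y\<in>?Y. (if ray_to E x \<omega> k = y then f \<omega> else 0) *
      (if ray_to E x \<omega>' k = y then 1 else 0))"
    by (intro separable_sum[OF finite_tdist_ball] separable_product loc_const_ray_to_indicator
        assms loc_const_const)
  fix \<omega> \<omega>' assume \<omega>: "\<omega> \<in> boundary E" and "\<omega>' \<in> boundary E"
  have "(\<Sum>y\<in>?Y. (if ray_to E x \<omega> k = y then f \<omega> else 0) * (if ray_to E x \<omega>' k = y then 1 else 0))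
      = (\<Sum>y\<in>?Y. if ray_to E x \<omega> k = y
          then f \<omega> * (if ray_to E x \<omega>' k = ray_to E x \<omega> k then 1 else 0) else 0)"
    by (rule sum.cong[OF refl]) auto
  also have "\<dots> = f \<omega> * (if ray_to E x \<omega>' k = ray_to E x \<omega> k then 1 else 0)"
    using tdist_ray_to[OF \<omega>] finite_tdist_ball by simp
  finally show "(\<Sum>y\<in>?Y. (if ray_to E x \<omega> k = y then f \<omega> else 0) * (if ray_to E x \<omega>' k = y then 1 else 0))
      = (if ray_to E x \<omega> k = ray_to E x \<omega>' k then f \<omega> else 0)" by auto
qed

lemma separable_ray_to_differ:
  assumes "loc_const E f"
  shows "separable E (\<lambda>\<omega> \<omega>'. if ray_to E x \<omega> k = ray_to E x \<omega>' k then 0 else f \<omega>)"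
  by (rule separable_cong[OF separable_add[OF separable_left[OF assms]
        separable_scale[OF separable_ray_to_agree[OF assms, where x = x and k = k], of "- 1"]]]) simp

lemma poisson_pair_ray_to:
  assumes \<omega>: "\<omega> \<in> boundary E" and \<omega>': "\<omega>' \<in> boundary E" and eq: "ray_to E x \<omega>' n = ray_to E x \<omega> n"
  shows "poisson q E o' s x \<omega> * poisson q E o' (- cnj s') x \<omega>' =
    exp (- of_nat n * (1 + \<i> * s - \<i> * cnj s') * of_real (ln (real q))) *
    (poisson q E o' s (ray_to E x \<omega> n) \<omega> * poisson q E o' (- cnj s') (ray_to E x \<omega> n) \<omega>')"
proof -
  have h: "horo E o' x \<omega> = horo E o' (ray_to E x \<omega> n) \<omega> - int n"
    "horo E o' x \<omega>' = horo E o' (ray_to E x \<omega> n) \<omega>' - int n"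
    using horo_ray_to[OF \<omega>] horo_ray_to[OF \<omega>', of o' x n] eq by simp_all
  show ?thesis unfolding poisson_def h by (simp add: algebra_simps flip: exp_add)
qed

lemma cutoff_ray_shift:
  assumes \<Gamma>: "tree_lattice E \<Gamma>" and \<Xi>: "cutoff E \<Gamma> \<Xi>"
  shows "cutoff E \<Gamma> (\<lambda>x \<omega>. \<Xi> (ray_to E x \<omega> n) \<omega>)"
  unfolding cutoff_def
proof (intro conjI allI ballI)
  have "{x. \<exists>\<omega>\<in>boundary E. \<Xi> (ray_to E x \<omega> n) \<omega> \<noteq> 0} \<subseteq> (\<Union>z\<in>cutoff_support E \<Xi>. {x. tdist E z x \<le> n})"
    unfolding cutoff_support_def using tdist_ray_to tdist_sym by fastforce
  then show "finite {x. \<exists>\<omega>\<in>boundary E. \<Xi> (ray_to E x \<omega> n) \<omega> \<noteq> 0}"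
    using cutoff_support_finite[OF \<Xi>] finite_tdist_ball by (meson finite_UN_I finite_subset)
  show "loc_const E (\<lambda>\<omega>. \<Xi> (ray_to E x \<omega> n) \<omega>)" for x
    using loc_const_ray_to_comp[OF cutoff_loc_const[OF \<Xi>]] .
  fix x \<omega> assume \<omega>: "\<omega> \<in> boundary E"
  let ?z = "ray_to E x \<omega> n"
  have e: "\<Xi> (ray_to E (\<gamma> x) (bact \<gamma> \<omega>) n) (bact \<gamma> \<omega>) = \<Xi> (\<gamma> ?z) (bact \<gamma> \<omega>)"
    if "\<gamma> \<in> \<Gamma>" for \<gamma>
    using ray_to_bact[OF tree_lattice_graph_aut[OF \<Gamma> that] \<omega>] by simp
  then have "{\<gamma> \<in> \<Gamma>. \<Xi> (ray_to E (\<gamma> x) (bact \<gamma> \<omega>) n) (bact \<gamma> \<omega>) \<noteq> 0} = {\<gamma> \<in> \<Gamma>. \<Xi> (\<gamma> ?z) (bact \<gamma> \<omega>) \<noteq> 0}"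
    by auto
  then have "(\<Sum>\<gamma>\<in>{\<gamma> \<in> \<Gamma>. \<Xi> (ray_to E (\<gamma> x) (bact \<gamma> \<omega>) n) (bact \<gamma> \<omega>) \<noteq> 0}.
      \<Xi> (ray_to E (\<gamma> x) (bact \<gamma> \<omega>) n) (bact \<gamma> \<omega>))
      = (\<Sum>\<gamma>\<in>{\<gamma> \<in> \<Gamma>. \<Xi> (\<gamma> ?z) (bact \<gamma> \<omega>) \<noteq> 0}. \<Xi> (\<gamma> ?z) (bact \<gamma> \<omega>))"
    using e by (intro sum.cong) auto
  also have "\<dots> = 1" using \<Xi> \<omega> unfolding cutoff_def by blast
  finally show "(\<Sum>\<gamma>\<in>{\<gamma> \<in> \<Gamma>. \<Xi> (ray_to E (\<gamma> x) (bact \<gamma> \<omega>) n) (bact \<gamma> \<omega>) \<noteq> 0}.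
      \<Xi> (ray_to E (\<gamma> x) (bact \<gamma> \<omega>) n) (bact \<gamma> \<omega>)) = 1" .
qed

section \<open>The near-diagonal part of the Wigner distribution\<close>

lemma sum_group_ray_to:
  assumes \<omega>: "\<omega> \<in> boundary E" and fin: "finite S" "finite T"
    and h: "\<And>x. h (ray_to E x \<omega> n) \<noteq> 0 \<Longrightarrow> x \<in> S" "\<And>z. h z \<noteq> 0 \<Longrightarrow> z \<in> T"
  shows "(\<Sum>x\<in>S. h (ray_to E x \<omega> n) * a x \<omega>) = (\<Sum>z\<in>T. h z * shift_sum E n a z \<omega>)"
proof -
  let ?z = "\<lambda>x. ray_to E x \<omega> n"
  let ?U = "{x. h (?z x) \<noteq> 0}" and ?pre = "{x. ?z x \<in> T}"
  have "finite ?pre"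
  proof (rule finite_subset[OF _ finite_UN_I[OF fin(2) finite_ray_to_preimage[OF \<omega>]]])
    show "?pre \<subseteq> (\<Union>z\<in>T. {y. ray_to E y \<omega> n = z})" by blast
  qed
  have "(\<Sum>x\<in>S. h (?z x) * a x \<omega>) = (\<Sum>x\<in>?U. h (?z x) * a x \<omega>)"
    using fin(1) h(1) by (intro sum.mono_neutral_right) auto
  also have "\<dots> = (\<Sum>x\<in>?pre. h (?z x) * a x \<omega>)"
    using \<open>finite ?pre\<close> h(2) by (intro sum.mono_neutral_left) auto
  also have "\<dots> = (\<Sum>z\<in>T. \<Sum>x\<in>{x \<in> ?pre. ?z x = z}. h (?z x) * a x \<omega>)"
    using fin(2) \<open>finite ?pre\<close> by (intro sum.group[symmetric]) auto
  also have "\<dots> = (\<Sum>z\<in>T. h z * shift_sum E n a z \<omega>)"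
  proof (rule sum.cong[OF refl])
    fix z assume "z \<in> T"
    then have "{x \<in> ?pre. ?z x = z} = {x. ?z x = z}" by auto
    then show "(\<Sum>x\<in>{x \<in> ?pre. ?z x = z}. h (?z x) * a x \<omega>) = h z * shift_sum E n a z \<omega>"
      by (simp add: shift_sum_eq[OF \<omega>] sum_distrib_left)
  qed
  finally show ?thesis .
qed

lemma near_kernel_regroup:
  assumes \<omega>: "\<omega> \<in> boundary E" and \<omega>': "\<omega>' \<in> boundary E"
    and fin: "finite (cutoff_support E \<Xi>)" "finite (cutoff_support E (\<lambda>x \<omega>. \<Xi> (ray_to E x \<omega> n) \<omega>))"
  shows "(\<Sum>x\<in>cutoff_support E (\<lambda>x \<omega>. \<Xi> (ray_to E x \<omega> n) \<omega>). \<Xi> (ray_to E x \<omega> n) \<omega> *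
      (if ray_to E x \<omega> (Suc n) = ray_to E x \<omega>' (Suc n) then a x \<omega> else 0) *
      poisson q E o' s x \<omega> * poisson q E o' (- cnj s') x \<omega>')
    = exp (- of_nat n * (1 + \<i> * s - \<i> * cnj s') * of_real (ln (real q))) *
      (\<Sum>z\<in>cutoff_support E \<Xi>. \<Xi> z \<omega> *
        (if ray_to E z \<omega> 1 = ray_to E z \<omega>' 1 then shift_sum E n a z \<omega> else 0) *
        poisson q E o' s z \<omega> * poisson q E o' (- cnj s') z \<omega>')"
proof -
  define c where "c = exp (- of_nat n * (1 + \<i> * s - \<i> * cnj s') * of_real (ln (real q)))"
  define G where "G z = \<Xi> z \<omega> * (if ray_to E z \<omega> 1 = ray_to E z \<omega>' 1 then 1 else 0) *
    poisson q E o' s z \<omega> * poisson q E o' (- cnj s') z \<omega>'" for z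
  have summand: "\<Xi> (ray_to E x \<omega> n) \<omega> *
      (if ray_to E x \<omega> (Suc n) = ray_to E x \<omega>' (Suc n) then a x \<omega> else 0) * poisson q E o' s x \<omega> * poisson q E o' (- cnj s') x \<omega>' = c * (G (ray_to E x \<omega> n) * a x \<omega>)" for x
  proof (cases "ray_to E x \<omega> (Suc n) = ray_to E x \<omega>' (Suc n)")
    case True
    then have "ray_to E x \<omega>' n = ray_to E x \<omega> n" using ray_to_prefix[OF \<omega> \<omega>' True] by simp
    from poisson_pair_ray_to[OF \<omega> \<omega>' this, of q o' s s'] show ?thesis
      using True ray_to_Suc_eq_iff[OF \<omega> \<omega>', of x n] unfolding G_def c_def by (simp add: mult_ac)
  qed (use ray_to_Suc_eq_iff[OF \<omega> \<omega>', of x n] in \<open>simp add: G_def\<close>)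
  have "(\<Sum>x\<in>cutoff_support E (\<lambda>x \<omega>. \<Xi> (ray_to E x \<omega> n) \<omega>). G (ray_to E x \<omega> n) * a x \<omega>)
      = (\<Sum>z\<in>cutoff_support E \<Xi>. G z * shift_sum E n a z \<omega>)"
    using \<omega> by (intro sum_group_ray_to fin) (auto simp: G_def cutoff_support_def)
  also have "\<dots> = (\<Sum>z\<in>cutoff_support E \<Xi>. \<Xi> z \<omega> *
      (if ray_to E z \<omega> 1 = ray_to E z \<omega>' 1 then shift_sum E n a z \<omega> else 0) *
      poisson q E o' s z \<omega> * poisson q E o' (- cnj s') z \<omega>')"
    unfolding G_def by (intro sum.cong refl) simp
  finally show ?thesis
    unfolding summand sum_distrib_left[symmetric] c_def[symmetric] by simp
qed

context
  fixes \<mu> \<mu>' :: "('v bdry \<Rightarrow> complex) \<Rightarrow> complex"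
  assumes \<mu>: "distribution E \<mu>" and \<mu>': "distribution E \<mu>'"
begin

text \<open>\<open>W - PS\<close> only sees the pairs \<open>(\<omega>, \<omega>')\<close> whose geodesic misses \<open>x\<close>.\<close>

lemma wigner_minus_patterson_sullivan:
  assumes \<Xi>: "cutoff E \<Gamma> \<Xi>" and b: "\<And>x. loc_const E (b x)"
  shows "wigner q E o' \<Xi> s s' \<mu> \<mu>' b - patterson_sullivan q E o' \<Xi> s s' \<mu> \<mu>' b =
    tensor_int \<mu> (cdist \<mu>') (\<lambda>\<omega> \<omega>'. \<Sum>x\<in>cutoff_support E \<Xi>.
      \<Xi> x \<omega> * (if ray_to E x \<omega> 1 = ray_to E x \<omega>' 1 then b x \<omega> else 0) *
      poisson q E o' s x \<omega> * poisson q E o' (- cnj s') x \<omega>')"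
proof -
  note fin = cutoff_support_finite[OF \<Xi>] and lc = cutoff_loc_const[OF \<Xi>]
  note T = tensor_int_cong[OF \<mu> distribution_cdist[OF \<mu>']]
  let ?k = "\<lambda>B \<omega> \<omega>'. \<Sum>x\<in>cutoff_support E \<Xi>. \<Xi> x \<omega> * B x \<omega> \<omega>' *
      poisson q E o' s x \<omega> * poisson q E o' (- cnj s') x \<omega>'"
  let ?W = "?k (\<lambda>x \<omega> \<omega>'. b x \<omega>)"
  let ?PS = "?k (\<lambda>x \<omega> \<omega>'. if ray_to E x \<omega> 1 = ray_to E x \<omega>' 1 then 0 else b x \<omega>)"
  have W: "separable E ?W" using fin lc b by (intro separable_cutoff_sum separable_left)
  have PS: "separable E ?PS" using fin lc b by (intro separable_cutoff_sum separable_ray_to_differ)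
  have "wigner q E o' \<Xi> s s' \<mu> \<mu>' b = tensor_int \<mu> (cdist \<mu>') ?W"
    unfolding wigner_def
  proof (rule T[OF W, symmetric])
    fix \<omega> \<omega>' assume "\<omega> \<in> boundary E"
    then show "?W \<omega> \<omega>' = (\<Sum>x\<in>{x. \<Xi> x \<omega> \<noteq> 0}. \<Xi> x \<omega> * b x \<omega> * poisson q E o' s x \<omega> *
        poisson q E o' (- cnj s') x \<omega>')"
      using fin by (intro sum.mono_neutral_cong_right) (auto simp: cutoff_support_def)
  qed
  moreover have "patterson_sullivan q E o' \<Xi> s s' \<mu> \<mu>' b = tensor_int \<mu> (cdist \<mu>') ?PS"
    unfolding patterson_sullivan_def
  proof (rule T[OF PS, symmetric])
    fix \<omega> \<omega>' assume \<omega>: "\<omega> \<in> boundary E" "\<omega>' \<in> boundary E"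
    then show "?PS \<omega> \<omega>' = (\<Sum>x\<in>{x \<in> geod E \<omega>' \<omega>. \<Xi> x \<omega> \<noteq> 0}. \<Xi> x \<omega> * b x \<omega> *
        poisson q E o' s x \<omega> * poisson q E o' (- cnj s') x \<omega>')"
      using fin by (intro sum.mono_neutral_cong_right) (auto simp: cutoff_support_def mem_geod_iff[OF \<omega>])
  qed
  moreover have "?W \<omega> \<omega>' - ?PS \<omega> \<omega>' =
      ?k (\<lambda>x \<omega> \<omega>'. if ray_to E x \<omega> 1 = ray_to E x \<omega>' 1 then b x \<omega> else 0) \<omega> \<omega>'" for \<omega> \<omega>'
    unfolding sum_subtractf[symmetric] by (intro sum.cong refl) (simp add: algebra_simps)
  ultimately show ?thesis
    using tensor_int_diff[OF \<mu> distribution_cdist[OF \<mu>'] W PS] by simp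
qed

lemma wigner_near_eq:
  assumes \<Xi>: "cutoff E \<Gamma> \<Xi>" and a: "\<And>x. loc_const E (a x)"
  shows "wigner_near q E o' \<Xi> s s' \<mu> \<mu>' n a =
    tensor_int \<mu> (cdist \<mu>') (\<lambda>\<omega> \<omega>'. \<Sum>x\<in>cutoff_support E \<Xi>.
      \<Xi> x \<omega> * (if ray_to E x \<omega> (Suc n) = ray_to E x \<omega>' (Suc n) then a x \<omega> else 0) *
      poisson q E o' s x \<omega> * poisson q E o' (- cnj s') x \<omega>')"
  unfolding wigner_near_def
proof (rule tensor_int_cong[OF \<mu> distribution_cdist[OF \<mu>'], symmetric])
  show "separable E (\<lambda>\<omega> \<omega>'. \<Sum>x\<in>cutoff_support E \<Xi>.
      \<Xi> x \<omega> * (if ray_to E x \<omega> (Suc n) = ray_to E x \<omega>' (Suc n) then a x \<omega> else 0) *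
      poisson q E o' s x \<omega> * poisson q E o' (- cnj s') x \<omega>')"
    using cutoff_support_finite[OF \<Xi>] cutoff_loc_const[OF \<Xi>] a
    by (intro separable_cutoff_sum separable_ray_to_agree)
  fix \<omega> \<omega>' assume \<omega>: "\<omega> \<in> boundary E" "\<omega>' \<in> boundary E"
  then show "(\<Sum>x\<in>cutoff_support E \<Xi>.
      \<Xi> x \<omega> * (if ray_to E x \<omega> (Suc n) = ray_to E x \<omega>' (Suc n) then a x \<omega> else 0) *
      poisson q E o' s x \<omega> * poisson q E o' (- cnj s') x \<omega>') =
    (\<Sum>x\<in>{x. \<Xi> x \<omega> \<noteq> 0}. (1 - (if in_S E n x \<omega> \<omega>' then 1 else 0)) * \<Xi> x \<omega> * a x \<omega> *
      poisson q E o' s x \<omega> * poisson q E o' (- cnj s') x \<omega>')"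
    using cutoff_support_finite[OF \<Xi>]
    by (intro sum.mono_neutral_cong_right) (auto simp: cutoff_support_def in_S_iff[OF \<omega>])
qed

lemma tensor_int_near_regroup:
  assumes \<Gamma>: "tree_lattice E \<Gamma>" and \<Xi>: "cutoff E \<Gamma> \<Xi>" and a: "\<And>x. loc_const E (a x)"
  shows "tensor_int \<mu> (cdist \<mu>') (\<lambda>\<omega> \<omega>'. \<Sum>x\<in>cutoff_support E (\<lambda>x \<omega>. \<Xi> (ray_to E x \<omega> n) \<omega>).
      \<Xi> (ray_to E x \<omega> n) \<omega> * (if ray_to E x \<omega> (Suc n) = ray_to E x \<omega>' (Suc n) then a x \<omega> else 0) *
      poisson q E o' s x \<omega> * poisson q E o' (- cnj s') x \<omega>')
    = exp (- of_nat n * (1 + \<i> * s - \<i> * cnj s') * of_real (ln (real q))) *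
      tensor_int \<mu> (cdist \<mu>') (\<lambda>\<omega> \<omega>'. \<Sum>z\<in>cutoff_support E \<Xi>. \<Xi> z \<omega> *
        (if ray_to E z \<omega> 1 = ray_to E z \<omega>' 1 then shift_sum E n a z \<omega> else 0) *
        poisson q E o' s z \<omega> * poisson q E o' (- cnj s') z \<omega>')"
proof -
  note \<Xi>n = cutoff_ray_shift[OF \<Gamma> \<Xi>, of n]
  let ?c = "exp (- of_nat n * (1 + \<i> * s - \<i> * cnj s') * of_real (ln (real q)))"
  let ?Q = "\<lambda>\<omega> \<omega>'. \<Sum>z\<in>cutoff_support E \<Xi>. \<Xi> z \<omega> *
    (if ray_to E z \<omega> 1 = ray_to E z \<omega>' 1 then shift_sum E n a z \<omega> else 0) *
    poisson q E o' s z \<omega> * poisson q E o' (- cnj s') z \<omega>'"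
  have "tensor_int \<mu> (cdist \<mu>') (\<lambda>\<omega> \<omega>'. \<Sum>x\<in>cutoff_support E (\<lambda>x \<omega>. \<Xi> (ray_to E x \<omega> n) \<omega>).
      \<Xi> (ray_to E x \<omega> n) \<omega> * (if ray_to E x \<omega> (Suc n) = ray_to E x \<omega>' (Suc n) then a x \<omega> else 0) *
      poisson q E o' s x \<omega> * poisson q E o' (- cnj s') x \<omega>')
    = tensor_int \<mu> (cdist \<mu>') (\<lambda>\<omega> \<omega>'. ?c * ?Q \<omega> \<omega>')"
  proof (rule tensor_int_cong[OF \<mu> distribution_cdist[OF \<mu>']])
    show "separable E (\<lambda>\<omega> \<omega>'. \<Sum>x\<in>cutoff_support E (\<lambda>x \<omega>. \<Xi> (ray_to E x \<omega> n) \<omega>).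
      \<Xi> (ray_to E x \<omega> n) \<omega> * (if ray_to E x \<omega> (Suc n) = ray_to E x \<omega>' (Suc n) then a x \<omega> else 0) *
      poisson q E o' s x \<omega> * poisson q E o' (- cnj s') x \<omega>')"
      using cutoff_support_finite[OF \<Xi>n] cutoff_loc_const[OF \<Xi>n] a
      by (intro separable_cutoff_sum separable_ray_to_agree)
  qed (rule near_kernel_regroup[OF _ _ cutoff_support_finite[OF \<Xi>] cutoff_support_finite[OF \<Xi>n]])
  also have "\<dots> = ?c * tensor_int \<mu> (cdist \<mu>') ?Q"
    using cutoff_support_finite[OF \<Xi>] cutoff_loc_const[OF \<Xi>] loc_const_shift_sum[OF a]
    by (intro tensor_int_scale[OF \<mu> distribution_cdist[OF \<mu>']] separable_cutoff_sum
        separable_ray_to_agree)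
  finally show ?thesis .
qed

end

end

theorem proposition5p8:
  fixes q n :: nat and E :: "'v \<Rightarrow> 'v \<Rightarrow> bool" and o' :: 'v
    and \<Gamma> :: "('v \<Rightarrow> 'v) set" and \<Xi> a :: "'v \<Rightarrow> 'v bdry \<Rightarrow> complex"
    and s s' :: complex and \<phi> \<phi>' :: "'v \<Rightarrow> complex"
    and \<mu> \<mu>' :: "('v bdry \<Rightarrow> complex) \<Rightarrow> complex"
  assumes "2 \<le> q"
    and "regular_tree q E"
    and "tree_lattice E \<Gamma>"
    and "cutoff E \<Gamma> \<Xi>"
    and "\<forall>\<gamma>\<in>\<Gamma>. \<forall>x. \<phi> (\<gamma> x) = \<phi> x"
    and "\<forall>\<gamma>\<in>\<Gamma>. \<forall>x. \<phi>' (\<gamma> x) = \<phi>' x"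
    and "\<forall>x. tree_laplacian q E \<phi> x = chi q s * \<phi> x"
    and "\<forall>x. tree_laplacian q E \<phi>' x = chi q s' * \<phi>' x"
    and "boundary_value q E o' s \<phi> \<mu>"
    and "boundary_value q E o' s' \<phi>' \<mu>'"
    and "lc_inv E \<Gamma> a"
  shows "wigner_near q E o' \<Xi> s s' \<mu> \<mu>' n a =
    exp (- of_nat n * (1 + \<i> * s - \<i> * cnj s') * of_real (ln (real q))) *
    (wigner q E o' \<Xi> s s' \<mu> \<mu>' (shift_sum E n a)
     - patterson_sullivan q E o' \<Xi> s s' \<mu> \<mu>' (shift_sum E n a))"
proof -
  interpret locally_finite_tree E using regular_tree_locally_finite_tree[OF assms(2)] .
  define b where
    "b x \<omega> \<omega>' = (if ray_to E x \<omega> (Suc n) = ray_to E x \<omega>' (Suc n) then a x \<omega> else 0)" for x \<omega> \<omega>'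
  note \<mu> = boundary_value_distribution[OF assms(9)] boundary_value_distribution[OF assms(10)]
  have a: "loc_const E (a x)" for x using assms(11) unfolding lc_inv_def by blast
  have b: "separable E (b x)" for x unfolding b_def by (rule separable_ray_to_agree[OF a])
  have b_inv: "b (\<gamma> x) (bact \<gamma> \<omega>) (bact \<gamma> \<omega>') = b x \<omega> \<omega>'"
    if "\<gamma> \<in> \<Gamma>" "\<omega> \<in> boundary E" "\<omega>' \<in> boundary E" for \<gamma> x \<omega> \<omega>'
    using that assms(11) ray_to_bact_eq_iff[OF tree_lattice_graph_aut[OF assms(3)]]
    unfolding b_def lc_inv_def by simp
  have "wigner_near q E o' \<Xi> s s' \<mu> \<mu>' n a = tensor_int \<mu> (cdist \<mu>') (\<lambda>\<omega> \<omega>'.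
      \<Sum>x\<in>cutoff_support E \<Xi>. \<Xi> x \<omega> * b x \<omega> \<omega>' * poisson q E o' s x \<omega> * poisson q E o' (- cnj s') x \<omega>')"
    unfolding b_def by (rule wigner_near_eq[OF \<mu> assms(4) a])
  also have "\<dots> = tensor_int \<mu> (cdist \<mu>') (\<lambda>\<omega> \<omega>'. \<Sum>x\<in>cutoff_support E (\<lambda>x \<omega>. \<Xi> (ray_to E x \<omega> n) \<omega>).
      \<Xi> (ray_to E x \<omega> n) \<omega> * b x \<omega> \<omega>' * poisson q E o' s x \<omega> * poisson q E o' (- cnj s') x \<omega>')"
    by (rule tensor_int_change_cutoff[OF assms(3,9,5,10,6) b b_inv assms(4)
          cutoff_ray_shift[OF assms(3,4)]])
  also have "\<dots> = exp (- of_nat n * (1 + \<i> * s - \<i> * cnj s') * of_real (ln (real q))) *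
      (wigner q E o' \<Xi> s s' \<mu> \<mu>' (shift_sum E n a)
       - patterson_sullivan q E o' \<Xi> s s' \<mu> \<mu>' (shift_sum E n a))"
    unfolding b_def tensor_int_near_regroup[OF \<mu> assms(3,4) a]
      wigner_minus_patterson_sullivan[OF \<mu> assms(4) loc_const_shift_sum[OF a]] ..
  finally show ?thesis .
qed

end
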